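(* Let $G$ be a tree of order $n \ge 2$ with stability number $\alpha$. Then \[ F(G) \le 3^{\,n-\alpha-1}\, 2^{\,2\alpha - n + 1} + 2^{\,n-\alpha-1}, \] with equality if and only if $G \simeq TC_{n,\alpha}$. Moreover, for $n/2 \le \alpha \le n-1$, $f_{\mathsf{TC}}(n,\alpha) = 3^{\,n-\alpha-1}\, 2^{\,2\alpha - n + 1} + 2^{\,n-\alpha-1}$.
   Context: The Fibonacci index $F(G)$ is the number of stable sets of $G$, including the empty set; $\alpha(G)$ is the stability number. For integers $1\le \alpha\le n$, the Turán graph $T_{n,\alpha}$ is the disjoint union of $\alpha$ cliques whose orders sum to $n$ and differ pairwise by at most one. For $1\le\alpha\le n-1$, the Turán-connected graph $TC_{n,\alpha}$ is obtained from $T_{n,\alpha}$ by choosing a vertex $v$ in one clique of order $\lceil n/\alpha\rceil$ and adding $\alpha-1$ edges joining $v$ to one vertex of each of the other $\alpha-1$ cliques; it is unique up to isomorphism. Define $f_{\mathsf{TC}}(n,\alpha)=F(TC_{n,\alpha})$. *)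

theory Defs
  imports Main
begin

definition simple_graph :: "'a set \<Rightarrow> 'a set set \<Rightarrow> bool" where
  "simple_graph V E \<longleftrightarrow> finite V \<and> (\<forall>e\<in>E. e \<subseteq> V \<and> card e = 2)"

definition stable_set :: "'a set \<Rightarrow> 'a set set \<Rightarrow> 'a set \<Rightarrow> bool" where
  "stable_set V E S \<longleftrightarrow> S \<subseteq> V \<and> (\<forall>x\<in>S. \<forall>y\<in>S. {x, y} \<notin> E)"

definition fib_index :: "'a set \<Rightarrow> 'a set set \<Rightarrow> nat" where
  "fib_index V E = card {S. stable_set V E S}"

definition stab_num :: "'a set \<Rightarrow> 'a set set \<Rightarrow> nat" where
  "stab_num V E = Max (card ` {S. stable_set V E S})"

definition connected_graph :: "'a set \<Rightarrow> 'a set set \<Rightarrow> bool" where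
  "connected_graph V E \<longleftrightarrow> V \<noteq> {} \<and>
     (\<forall>x\<in>V. \<forall>y\<in>V. (\<lambda>a b. {a, b} \<in> E)\<^sup>*\<^sup>* x y)"

definition has_cycle :: "'a set \<Rightarrow> 'a set set \<Rightarrow> bool" where
  "has_cycle V E \<longleftrightarrow> (\<exists>vs. length vs \<ge> 3 \<and> distinct vs \<and> set vs \<subseteq> V \<and>
     (\<forall>i. i + 1 < length vs \<longrightarrow> {vs ! i, vs ! (i + 1)} \<in> E) \<and>
     {last vs, hd vs} \<in> E)"

definition is_tree :: "'a set \<Rightarrow> 'a set set \<Rightarrow> bool" where
  "is_tree V E \<longleftrightarrow> simple_graph V E \<and> connected_graph V E \<and> \<not> has_cycle V E"

definition graph_iso :: "'a set \<Rightarrow> 'a set set \<Rightarrow> 'b set \<Rightarrow> 'b set set \<Rightarrow> bool" where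
  "graph_iso V E V' E' \<longleftrightarrow> (\<exists>f. bij_betw f V V' \<and>
     (\<forall>x\<in>V. \<forall>y\<in>V. {x, y} \<in> E \<longleftrightarrow> {f x, f y} \<in> E'))"

text \<open>Turan-connected graph TC_{n,alpha}: cliques i < alpha on vertices (i,j), j < size i,
  with sizes n div alpha (+1 for i < n mod alpha), so clique 0 has order ceil(n/alpha);
  the vertex (0,0) is joined to (i,0) for every 0 < i < alpha.\<close>
definition tc_size :: "nat \<Rightarrow> nat \<Rightarrow> nat \<Rightarrow> nat" where
  "tc_size n a i = n div a + (if i < n mod a then 1 else 0)"

definition TC_V :: "nat \<Rightarrow> nat \<Rightarrow> (nat \<times> nat) set" where
  "TC_V n a = {(i, j). i < a \<and> j < tc_size n a i}"

definition TC_E :: "nat \<Rightarrow> nat \<Rightarrow> (nat \<times> nat) set set" where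
  "TC_E n a =
     {{(i, j), (i, j')} | i j j'. (i, j) \<in> TC_V n a \<and> (i, j') \<in> TC_V n a \<and> j \<noteq> j'}
   \<union> {{(0, 0), (i, 0)} | i. 0 < i \<and> i < a}"

definition f_TC :: "nat \<Rightarrow> nat \<Rightarrow> nat" where
  "f_TC n a = fib_index (TC_V n a) (TC_E n a)"

end

theory Submission
  imports Defs
begin

(* The proof runs through two inductions that delete a leaf u together with its
   support w, using F(G) = F(G - y) + F(G - N[y]) and the matching recurrence for
   alpha.  First, every forest satisfies n <= 2 alpha and F <= 3^(n-alpha) 2^(2 alpha-n)
   (forest_bound), with equality only if the forest has maximum degree at most one.
   Second, every tree satisfies F <= tree_bound n alpha, with equality only if for
   some vertex v the forest X - v has maximum degree at most one and an isolated
   vertex; such a tree is a spider with centre v.  A spider is determined up to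
   isomorphism by its numbers of short legs and feet, and TC(n, alpha) is the spider
   with the right numbers, which yields both the equality case and the value
   f_TC(n, alpha). *)

definition nbhd :: "'a set set \<Rightarrow> 'a set \<Rightarrow> 'a \<Rightarrow> 'a set" where
  "nbhd E X y = {z \<in> X. {y, z} \<in> E}"

definition loopless :: "'a set set \<Rightarrow> bool" where
  "loopless E \<longleftrightarrow> (\<forall>x. {x} \<notin> E)"

(* The subgraph induced on X has maximum degree at most one: a matching
   together with isolated vertices. *)
definition induced_matching :: "'a set set \<Rightarrow> 'a set \<Rightarrow> bool" where
  "induced_matching E X \<longleftrightarrow> (\<forall>y\<in>X. \<forall>a\<in>nbhd E X y. \<forall>b\<in>nbhd E X y. a = b)"

definition forest_bound :: "nat \<Rightarrow> nat \<Rightarrow> nat" where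
  "forest_bound m a = 3 ^ (m - a) * 2 ^ (2 * a - m)"

definition tree_bound :: "nat \<Rightarrow> nat \<Rightarrow> nat" where
  "tree_bound n a = 3 ^ (n - a - 1) * 2 ^ (2 * a - n + 1) + 2 ^ (n - a - 1)"

lemma doubleton_sym: "{a, b} = {b, a}"
  by blast

lemma nbhd_subset: "nbhd E X y \<subseteq> X"
  by (auto simp: nbhd_def)

lemma nbhd_Diff: "nbhd E (X - A) y = nbhd E X y - A"
  by (auto simp: nbhd_def)

lemma nbhd_sym: "z \<in> nbhd E X y \<Longrightarrow> y \<in> X \<Longrightarrow> y \<in> nbhd E X z"
  by (simp add: nbhd_def doubleton_sym)

lemma loopless_edge_ends: "loopless E \<Longrightarrow> {a, b} \<in> E \<Longrightarrow> a \<noteq> b"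
  by (auto simp: loopless_def)

lemma loopless_not_in_nbhd: "loopless E \<Longrightarrow> y \<notin> nbhd E X y"
  by (auto simp: loopless_def nbhd_def)

lemma induced_matchingI:
  "(\<And>y. y \<in> X \<Longrightarrow> \<exists>c. nbhd E X y \<subseteq> {c}) \<Longrightarrow> induced_matching E X"
  unfolding induced_matching_def by blast

lemma induced_matchingD:
  "induced_matching E X \<Longrightarrow> y \<in> X \<Longrightarrow> a \<in> nbhd E X y \<Longrightarrow> nbhd E X y = {a}"
  unfolding induced_matching_def by blast

lemma induced_matching_subset: "induced_matching E X \<Longrightarrow> Y \<subseteq> X \<Longrightarrow> induced_matching E Y"
  unfolding induced_matching_def nbhd_def by blast

lemma induced_matching_extend:
  assumes "induced_matching E (X - D)"
    and "\<And>y. y \<in> X - D \<Longrightarrow> nbhd E X y \<inter> D = {}"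
    and "\<And>y. y \<in> X \<inter> D \<Longrightarrow> \<exists>c. nbhd E X y \<subseteq> {c}"
  shows "induced_matching E X"
proof (rule induced_matchingI)
  fix y assume y: "y \<in> X"
  show "\<exists>c. nbhd E X y \<subseteq> {c}"
  proof (cases "y \<in> D")
    case False
    then have "nbhd E X y = nbhd E (X - D) y" using assms(2) y by (auto simp: nbhd_Diff)
    then show ?thesis using assms(1) y False unfolding induced_matching_def by blast
  qed (use assms(3) y in blast)
qed

lemma has_cycle_mono: "has_cycle Y E \<Longrightarrow> Y \<subseteq> X \<Longrightarrow> has_cycle X E"
  unfolding has_cycle_def by blast

lemma card_Diff_two:
  assumes "finite X" "y \<in> X" "z \<in> X" "y \<noteq> z"
  shows "card X = card (X - {y, z}) + 2"
proof -
  have "{y, z} \<subseteq> X" using assms by auto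
  then show ?thesis using assms card_mono[OF assms(1), of "{y, z}"]
    by (simp add: card_Diff_subset)
qed

lemma stable_subset: "stable_set X E S \<Longrightarrow> S \<subseteq> X"
  by (simp add: stable_set_def)

lemma stable_set_mono: "stable_set X E S \<Longrightarrow> X \<subseteq> Y \<Longrightarrow> stable_set Y E S"
  by (auto simp: stable_set_def)

lemma finite_stable_sets: "finite X \<Longrightarrow> finite {S. stable_set X E S}"
  by (rule finite_subset[of _ "Pow X"]) (auto simp: stable_set_def)

lemma stable_empty: "stable_set X E {}"
  by (simp add: stable_set_def)

lemma stable_set_edgeless:
  "(\<And>a b. a \<in> X \<Longrightarrow> b \<in> X \<Longrightarrow> {a, b} \<notin> E) \<Longrightarrow> stable_set X E S \<longleftrightarrow> S \<subseteq> X"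
  unfolding stable_set_def by blast

lemma stab_num_ge: "finite X \<Longrightarrow> stable_set X E S \<Longrightarrow> card S \<le> stab_num X E"
  unfolding stab_num_def by (rule Max_ge) (auto simp: finite_stable_sets)

lemma stab_num_attained: "finite X \<Longrightarrow> \<exists>S. stable_set X E S \<and> card S = stab_num X E"
proof -
  assume "finite X"
  then have "stab_num X E \<in> card ` {S. stable_set X E S}"
    unfolding stab_num_def using stable_empty by (intro Max_in) (auto simp: finite_stable_sets)
  then show ?thesis by auto
qed

lemma stab_num_le_card: "finite X \<Longrightarrow> stab_num X E \<le> card X"
  using stab_num_attained[of X E] by (metis card_mono stable_subset)

lemma stab_num_mono: "finite Y \<Longrightarrow> X \<subseteq> Y \<Longrightarrow> stab_num X E \<le> stab_num Y E"
  using stab_num_attained[of X E] stab_num_ge[of Y E] stable_set_mono finite_subset by metis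

lemma fib_index_empty: "fib_index {} E = 1"
proof -
  have "{S. stable_set {} E S} = {{}}" by (auto simp: stable_set_def)
  then show ?thesis by (simp add: fib_index_def)
qed

lemma stab_num_empty: "stab_num {} E = 0"
  using stab_num_le_card[of "{}" E] by simp

lemma edgeless_fib_stab:
  assumes "finite X" "\<And>a b. a \<in> X \<Longrightarrow> b \<in> X \<Longrightarrow> {a, b} \<notin> E"
  shows "fib_index X E = 2 ^ card X" "stab_num X E = card X"
proof -
  have "{S. stable_set X E S} = Pow X" using stable_set_edgeless[OF assms(2)] by blast
  then show "fib_index X E = 2 ^ card X" using assms(1) by (simp add: fib_index_def card_Pow)
  have "stable_set X E X" using stable_set_edgeless[OF assms(2)] by blast
  then show "stab_num X E = card X"
    using stab_num_ge[OF assms(1)] stab_num_le_card[OF assms(1)] le_antisym by blast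
qed

lemma stable_sets_split:
  assumes "loopless E" "y \<in> X"
  shows "{S. stable_set X E S} =
    {S. stable_set (X - {y}) E S} \<union> insert y ` {S. stable_set (X - insert y (nbhd E X y)) E S}"
    (is "?A = ?B \<union> insert y ` ?C")
proof (intro set_eqI iffI)
  fix S assume "S \<in> ?A"
  then have S: "stable_set X E S" by simp
  show "S \<in> ?B \<union> insert y ` ?C"
  proof (cases "y \<in> S")
    case True
    then have "S - {y} \<in> ?C" "S = insert y (S - {y})"
      using S unfolding stable_set_def nbhd_def by auto
    then show ?thesis by blast
  next
    case False
    then have "S \<in> ?B" using S unfolding stable_set_def by blast
    then show ?thesis by blast
  qed
next
  fix S assume S: "S \<in> ?B \<union> insert y ` ?C"
  have "stable_set X E (insert y T)" if T: "T \<in> ?C" for T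
  proof -
    have "{y, t} \<notin> E \<and> {t, y} \<notin> E" if "t \<in> T" for t
      using T that unfolding stable_set_def nbhd_def by (auto simp: doubleton_sym)
    moreover have "{y, y} \<notin> E" using assms(1) by (simp add: loopless_def)
    ultimately show ?thesis using T assms(2) unfolding stable_set_def by auto
  qed
  moreover have "stable_set X E S" if "S \<in> ?B"
    using that stable_set_mono[of "X - {y}" E S X] by blast
  ultimately show "S \<in> ?A" using S by blast
qed

lemma fib_index_delete:
  assumes "finite X" "loopless E" "y \<in> X"
  shows "fib_index X E = fib_index (X - {y}) E + fib_index (X - insert y (nbhd E X y)) E"
proof -
  let ?C = "{S. stable_set (X - insert y (nbhd E X y)) E S}"
  have disj: "{S. stable_set (X - {y}) E S} \<inter> insert y ` ?C = {}"
    by (auto simp: stable_set_def)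
  have inj: "inj_on (insert y) ?C"
    unfolding inj_on_def stable_set_def by blast
  show ?thesis
    unfolding fib_index_def stable_sets_split[OF assms(2,3)]
    using assms(1) disj card_image[OF inj]
    by (subst card_Un_disjoint) (auto intro: finite_stable_sets)
qed

lemma stab_num_delete:
  assumes f: "finite X" and "loopless E" and y: "y \<in> X"
  shows "stab_num X E = max (stab_num (X - {y}) E) (1 + stab_num (X - insert y (nbhd E X y)) E)"
proof -
  let ?N = "X - insert y (nbhd E X y)"
  let ?rhs = "max (stab_num (X - {y}) E) (1 + stab_num ?N E)"
  have card_insert: "card (insert y S) = 1 + card S" if "stable_set ?N E S" for S
    using that f by (subst card_insert_disjoint) (auto dest: stable_subset intro: finite_subset)
  have "card S \<le> ?rhs" if "stable_set X E S" for S
  proof -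
    have "S \<in> {S. stable_set (X - {y}) E S} \<union> insert y ` {S. stable_set ?N E S}"
      using that stable_sets_split[OF assms(2,3)] by blast
    then show ?thesis
    proof
      assume "S \<in> {S. stable_set (X - {y}) E S}"
      then show ?thesis using stab_num_ge[of "X - {y}" E S] f by simp
    next
      assume "S \<in> insert y ` {S. stable_set ?N E S}"
      then obtain T where "stable_set ?N E T" "S = insert y T" by blast
      then show ?thesis using stab_num_ge[of ?N E T] card_insert f by simp
    qed
  qed
  moreover obtain S where "stable_set X E S" "card S = stab_num X E"
    using stab_num_attained[OF f] by blast
  ultimately have le: "stab_num X E \<le> ?rhs" by metis
  obtain T where T: "stable_set ?N E T" "card T = stab_num ?N E"
    using stab_num_attained f by blast
  have "stable_set X E (insert y T)"
    using T(1) stable_sets_split[OF assms(2,3)] by blast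
  then have "1 + stab_num ?N E \<le> stab_num X E"
    using stab_num_ge[OF f] card_insert[OF T(1)] T(2) by metis
  moreover have "stab_num (X - {y}) E \<le> stab_num X E"
    using stab_num_mono f by blast
  ultimately show ?thesis using le by simp
qed

(* Each lemma is the numerical identity or
   inequality used in one case of the inductions below; the proofs write the
   parameters as a = j + d, m = 2 j + d (resp. shifted), after which the
   exponents become linear and simplification closes the goal. *)

lemma forest_bound_empty: "forest_bound 0 0 = 1"
  by (simp add: forest_bound_def)

lemma forest_bound_isolated: "m \<le> 2 * a \<Longrightarrow> forest_bound (Suc m) (Suc a) = 2 * forest_bound m a"
  unfolding forest_bound_def by (simp add: Suc_diff_le)

lemma forest_bound_edge:
  assumes "m \<le> 2 * a" "a \<le> m"
  shows "forest_bound (m + 2) (a + 1) = 3 * forest_bound m a"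
proof -
  define j d where "j = m - a" and "d = 2 * a - m"
  have "a = j + d" "m = 2 * j + d" using assms unfolding j_def d_def by auto
  then show ?thesis unfolding forest_bound_def by simp
qed

lemma forest_bound_strict_mono:
  assumes "m \<le> 2 * a" "a < b" "b \<le> m"
  shows "forest_bound m a < forest_bound m b"
proof -
  define j k d where "j = m - b" and "k = b - a" and "d = 2 * a - m"
  have ab: "a = k + j + d" "b = 2 * k + j + d" "m = 2 * k + 2 * j + d"
    using assms unfolding j_def k_def d_def by auto
  have "(3::nat) ^ k < 4 ^ k" using assms unfolding k_def
    by (intro power_strict_mono) auto
  also have "(4::nat) ^ k = 2 ^ (2 * k)" by (simp add: power_mult)
  finally have "3 ^ j * 2 ^ d * 3 ^ k < 3 ^ j * 2 ^ d * (2::nat) ^ (2 * k)" by simp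
  then show ?thesis
    unfolding forest_bound_def ab by (simp add: power_add power_mult ac_simps)
qed

lemma forest_bound_mono: "m \<le> 2 * a \<Longrightarrow> a \<le> b \<Longrightarrow> b \<le> m \<Longrightarrow> forest_bound m a \<le> forest_bound m b"
  using forest_bound_strict_mono by (metis le_less)

(* Deleting a leaf u and its support w: if alpha does not drop when u alone is
   removed, the two subforests together stay strictly below the bound. *)
lemma forest_bound_leaf_gap:
  assumes "m + 1 \<le> 2 * a" "a \<le> m"
  shows "forest_bound (m + 1) a + forest_bound m a < forest_bound (m + 2) (a + 1)"
proof -
  define j d where "j = m - a" and "d = 2 * a - m - 1"
  have "a = j + d + 1" "m = 2 * j + d + 1" using assms unfolding j_def d_def by auto
  then show ?thesis unfolding forest_bound_def by simp
qed

(* The tree recurrence when the support vertex w carries two leaves. *)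
lemma tree_bound_two_leaves:
  assumes "m + 1 \<le> 2 * a" "a \<le> m"
  shows "tree_bound (m + 1) a + forest_bound m a = tree_bound (m + 2) (a + 1)"
proof -
  define j d where "j = m - a" and "d = 2 * a - m - 1"
  have "a = j + d + 1" "m = 2 * j + d + 1" using assms unfolding j_def d_def by auto
  then show ?thesis unfolding forest_bound_def tree_bound_def by simp
qed

(* The tree recurrence when w has exactly one further neighbour x. *)
lemma tree_bound_pendant_path:
  assumes "m \<le> 2 * a" "a + 1 \<le> m"
  shows "2 * tree_bound m a + forest_bound (m - 1) a = tree_bound (m + 2) (a + 1)"
proof -
  define j d where "j = m - a - 1" and "d = 2 * a - m"
  have "a = j + d + 1" "m = 2 * j + d + 2" using assms unfolding j_def d_def by auto
  then show ?thesis unfolding forest_bound_def tree_bound_def by simp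
qed

(* The value of the bound for a spider with s short and f long legs. *)
lemma tree_bound_spider:
  assumes "1 \<le> s"
  shows "tree_bound (1 + s + 2 * f) (s + f) = forest_bound (s + 2 * f) (s + f) + 2 ^ f"
proof -
  obtain s' where "s = Suc s'" using assms by (cases s) auto
  then show ?thesis unfolding forest_bound_def tree_bound_def by simp
qed

definition graph_path :: "'a set set \<Rightarrow> 'a set \<Rightarrow> 'a list \<Rightarrow> bool" where
  "graph_path E X P \<longleftrightarrow> P \<noteq> [] \<and> distinct P \<and> set P \<subseteq> X \<and>
     (\<forall>i. i + 1 < length P \<longrightarrow> {P ! i, P ! (i + 1)} \<in> E)"

lemma path_chord_cycle:
  assumes "graph_path E X P" "j + 2 < length P" "{last P, P ! j} \<in> E"
  shows "has_cycle X E"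
  unfolding has_cycle_def
proof (intro exI[of _ "drop j P"] conjI allI impI)
  show "3 \<le> length (drop j P)" using assms by simp
  show "distinct (drop j P)" using assms by (simp add: graph_path_def)
  show "set (drop j P) \<subseteq> X" using assms unfolding graph_path_def by (meson order_trans set_drop_subset)
  fix i assume "i + 1 < length (drop j P)"
  then show "{drop j P ! i, drop j P ! (i + 1)} \<in> E" using assms unfolding graph_path_def
    by (simp add: add.assoc)
next
  show "{last (drop j P), hd (drop j P)} \<in> E" using assms by (simp add: hd_drop_conv_nth)
qed

lemma path_take: "graph_path E X P \<Longrightarrow> 0 < k \<Longrightarrow> graph_path E X (take k P)"
  unfolding graph_path_def by (auto dest: in_set_takeD)

lemma path_snoc:
  assumes "graph_path E X P" "t \<in> X" "t \<notin> set P" "{last P, t} \<in> E"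
  shows "graph_path E X (P @ [t])"
  unfolding graph_path_def
proof (intro conjI allI impI)
  show "P @ [t] \<noteq> []" "distinct (P @ [t])" "set (P @ [t]) \<subseteq> X"
    using assms by (auto simp: graph_path_def)
  fix i assume i: "i + 1 < length (P @ [t])"
  show "{(P @ [t]) ! i, (P @ [t]) ! (i + 1)} \<in> E"
  proof (cases "i + 1 < length P")
    case True then show ?thesis using assms by (simp add: graph_path_def nth_append)
  next
    case False
    then have "i = length P - 1" "P \<noteq> []" using i assms(1) by (auto simp: graph_path_def)
    then show ?thesis using assms(4) by (simp add: nth_append last_conv_nth)
  qed
qed

lemma last_take_nth:
  assumes "0 < k" "k \<le> length P"
  shows "last (take k P) = P ! (k - 1)"
proof -
  have "take k P \<noteq> []" using assms by auto
  then show ?thesis using assms by (simp add: last_conv_nth)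
qed

lemma longest_path_exists:
  assumes "finite X" "graph_path E X P0"
  obtains P where "graph_path E X P" "\<And>Q. graph_path E X Q \<Longrightarrow> length Q \<le> length P"
    "length P0 \<le> length P"
proof -
  have "length P < card X + 1" if "graph_path E X P" for P
    using that assms(1) unfolding graph_path_def
    by (metis card_mono distinct_card less_Suc_eq_le Suc_eq_plus1)
  then show ?thesis
    using ex_has_greatest_nat[of "graph_path E X" P0 length "card X + 1"] assms(2) that by blast
qed

(* In a forest the last vertex of a longest path (with at least two vertices) is a
   leaf: a neighbour off the path would extend it, one on the path would close a cycle. *)
lemma longest_path_end_leaf:
  assumes "loopless E" and acyclic: "\<not> has_cycle X E"
    and P: "graph_path E X P" and longest: "\<And>Q. graph_path E X Q \<Longrightarrow> length Q \<le> length P"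
    and L: "2 \<le> length P"
  shows "nbhd E X (last P) = {P ! (length P - 2)}"
proof -
  define K where "K = length P - 2"
  have K: "length P = K + 2" using L unfolding K_def by simp
  then have "P \<noteq> []" by auto
  then have last: "last P = P ! (K + 1)" using K by (simp add: last_conv_nth)
  have "{P ! K, P ! (K + 1)} \<in> E" using P K unfolding graph_path_def by simp
  moreover have "P ! K \<in> X" using P K nth_mem[of K P] unfolding graph_path_def by auto
  ultimately have "P ! K \<in> nbhd E X (last P)" unfolding nbhd_def last by (simp add: doubleton_sym)
  moreover have "t = P ! K" if t: "t \<in> nbhd E X (last P)" for t
  proof -
    have tX: "t \<in> X" and te: "{last P, t} \<in> E" using t unfolding nbhd_def by auto
    have "t \<in> set P"
    proof (rule ccontr)
      assume "t \<notin> set P"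
      then have "length (P @ [t]) \<le> length P" using longest path_snoc[OF P tX _ te] by blast
      then show False by simp
    qed
    then obtain j where j: "j < length P" "t = P ! j" by (auto simp: in_set_conv_nth)
    have "j \<noteq> K + 1" using te last j loopless_edge_ends[OF assms(1)] by auto
    moreover have "\<not> j + 2 < length P"
      using path_chord_cycle[OF P, of j] te acyclic unfolding j(2) by blast
    ultimately have "j = K" using j K by linarith
    then show ?thesis using j by simp
  qed
  ultimately have "nbhd E X (last P) = {P ! K}" by blast
  then show ?thesis unfolding K_def .
qed

(* Fix a longest path P = [..., x, w, u] in a forest; u is a leaf with support
   w = P!(L-2), and x = P!(L-3) is the predecessor of w. *)
context
  fixes E :: "'a set set" and X :: "'a set" and P :: "'a list"
  assumes loopless: "loopless E" and acyclic: "\<not> has_cycle X E"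
    and P: "graph_path E X P" and longest: "\<And>Q. graph_path E X Q \<Longrightarrow> length Q \<le> length P"
    and L: "2 \<le> length P"
begin

(* Neighbours of w beyond the initial segment of the path are leaves attached to w:
   either t is the end u itself, or t may replace u to give another longest path. *)
lemma longest_path_support_leaves:
  assumes t: "t \<in> nbhd E X (P ! (length P - 2))" and off: "t \<notin> set (take (length P - 2) P)"
  shows "nbhd E X t = {P ! (length P - 2)}"
proof -
  define L w where "L = length P" and "w = P ! (length P - 2)"
  have tX: "t \<in> X" and wt: "{w, t} \<in> E" using t unfolding nbhd_def w_def by auto
  have P': "graph_path E X (take (L - 1) P)" using path_take[OF P] L unfolding L_def by simp
  have last': "last (take (L - 1) P) = w"
    using last_take_nth[of "L - 1" P] L unfolding L_def w_def by (simp add: numeral_2_eq_2)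
  show ?thesis
  proof (cases "t \<in> set P")
    case True
    then obtain j where j: "j < L" "t = P ! j" unfolding L_def by (metis in_set_conv_nth)
    have "j \<ge> L - 2"
    proof (rule ccontr)
      assume "\<not> j \<ge> L - 2"
      then have "j < length (take (L - 2) P)" "take (L - 2) P ! j = t" using j unfolding L_def by auto
      then show False using off nth_mem unfolding L_def by metis
    qed
    moreover have "j \<noteq> L - 2" using wt j loopless_edge_ends[OF loopless] unfolding w_def L_def by auto
    ultimately have "j = L - 1" using j by linarith
    moreover have "P \<noteq> []" using L by auto
    ultimately have "t = last P" using j unfolding L_def by (simp add: last_conv_nth)
    then show ?thesis using longest_path_end_leaf[OF loopless acyclic P longest L] by simp
  next
    case False
    define Q where "Q = take (L - 1) P @ [t]"
    have Q: "graph_path E X Q" unfolding Q_def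
      using path_snoc[OF P' tX] False last' wt by (meson in_set_takeD)
    have lQ: "length Q = L" unfolding Q_def L_def using L by simp
    have "L - 2 < L - 1" using L unfolding L_def by linarith
    then have "Q ! (L - 2) = w" unfolding Q_def w_def L_def by (simp add: nth_append)
    moreover have "nbhd E X (last Q) = {Q ! (length Q - 2)}"
      using longest_path_end_leaf[OF loopless acyclic Q] longest lQ L unfolding L_def by simp
    ultimately show ?thesis using lQ unfolding Q_def w_def L_def by (simp add: numeral_2_eq_2)
  qed
qed

(* Inside the initial segment, w can only see its predecessor x = P!(L-3);
   any other neighbour there would close a cycle. *)
lemma longest_path_support_back:
  assumes t: "t \<in> nbhd E X (P ! (length P - 2))" and on: "t \<in> set (take (length P - 2) P)"
  shows "t = P ! (length P - 3)"
proof -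
  define L where "L = length P"
  obtain j where j: "j < L - 2" "t = P ! j"
    using on unfolding L_def by (auto simp: in_set_conv_nth)
  have P': "graph_path E X (take (L - 1) P)" using path_take[OF P] L unfolding L_def by simp
  have last': "last (take (L - 1) P) = P ! (L - 2)"
    using last_take_nth[of "L - 1" P] L unfolding L_def by (simp add: numeral_2_eq_2)
  have "{last (take (L - 1) P), take (L - 1) P ! j} \<in> E"
    using t j last' unfolding nbhd_def L_def by simp
  then have "\<not> j + 2 < L - 1" using path_chord_cycle[OF P'] acyclic L unfolding L_def by auto
  then have "j = L - 3" using j by arith
  then show ?thesis using j unfolding L_def by simp
qed

end

lemma leaf_with_leafy_support:
  assumes "finite X" "loopless E" "\<not> has_cycle X E"
    and e: "a \<in> X" "b \<in> X" "{a, b} \<in> E"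
  obtains u w x where "u \<in> X" "nbhd E X u = {w}" "\<And>t. t \<in> nbhd E X w - {x} \<Longrightarrow> nbhd E X t = {w}"
proof -
  have ab: "graph_path E X [a, b]"
    using e loopless_edge_ends[OF assms(2) e(3)] unfolding graph_path_def by (auto simp: less_Suc_eq)
  obtain P where P: "graph_path E X P" and longest: "\<And>Q. graph_path E X Q \<Longrightarrow> length Q \<le> length P"
    and "length [a, b] \<le> length P"
    using longest_path_exists[OF assms(1) ab] by blast
  then have L: "2 \<le> length P" by simp
  define w x where "w = P ! (length P - 2)" and "x = P ! (length P - 3)"
  have "nbhd E X t = {w}" if "t \<in> nbhd E X w - {x}" for t
    using that longest_path_support_leaves[OF assms(2,3) P longest L]
      longest_path_support_back[OF assms(2,3) P longest L] unfolding w_def x_def by blast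
  moreover have "last P \<in> X" using P unfolding graph_path_def by auto
  moreover have "nbhd E X (last P) = {w}"
    using longest_path_end_leaf[OF assms(2,3) P longest L] unfolding w_def .
  ultimately show ?thesis using that by blast
qed

lemma leaf_neighbour:
  assumes "loopless E" "nbhd E X u = {w}"
  shows "w \<in> X" "u \<noteq> w"
proof -
  have "w \<in> nbhd E X u" using assms(2) by simp
  then show "w \<in> X" "u \<noteq> w" using loopless_edge_ends[OF assms(1)] by (auto simp: nbhd_def)
qed

lemma isolated_vertex_delete:
  assumes "finite X" "loopless E" "y \<in> X" "nbhd E X y = {}"
  shows "fib_index X E = 2 * fib_index (X - {y}) E" "stab_num X E = Suc (stab_num (X - {y}) E)"
  using fib_index_delete[OF assms(1-3)] stab_num_delete[OF assms(1-3)] assms(4) by simp_all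

lemma leaf_delete:
  assumes f: "finite X" and nl: "loopless E" and u: "u \<in> X" and n: "nbhd E X u = {w}"
  shows "fib_index X E = fib_index (X - {u}) E + fib_index (X - {u, w}) E"
    and "stab_num X E = Suc (stab_num (X - {u, w}) E)"
    and "stab_num (X - {u, w}) E \<le> stab_num (X - {u}) E"
    and "stab_num (X - {u}) E \<le> stab_num X E"
proof -
  have closed_nbhd: "X - insert u (nbhd E X u) = X - {u, w}" using n by auto
  show "fib_index X E = fib_index (X - {u}) E + fib_index (X - {u, w}) E"
    using fib_index_delete[OF f nl u] closed_nbhd by simp
  show "stab_num (X - {u, w}) E \<le> stab_num (X - {u}) E" "stab_num (X - {u}) E \<le> stab_num X E"
    using f by (auto intro: stab_num_mono)
  have w: "w \<in> X - {u}" using leaf_neighbour[OF nl n] by simp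
  have "X - {u} - {w} = X - {u, w}" by auto
  moreover have "stab_num (X - {u} - insert w (nbhd E (X - {u}) w)) E \<le> stab_num (X - {u, w}) E"
    using f by (intro stab_num_mono) auto
  ultimately have "stab_num (X - {u}) E \<le> Suc (stab_num (X - {u, w}) E)"
    using stab_num_delete[OF _ nl w] f by simp
  then show "stab_num X E = Suc (stab_num (X - {u, w}) E)"
    using stab_num_delete[OF f nl u] closed_nbhd by simp
qed

(* A graph of maximum degree at most one with k edges and i isolated vertices has
   F = 3^k 2^i and alpha = k + i; in terms of order m and alpha this is forest_bound. *)
lemma induced_matching_fib:
  assumes "finite X" "loopless E" "induced_matching E X"
  shows "card X \<le> 2 * stab_num X E \<and> fib_index X E = forest_bound (card X) (stab_num X E)"
  using assms
proof (induction "card X" arbitrary: X rule: less_induct)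
  case less
  note f = less.prems(1) and nl = less.prems(2) and m = less.prems(3)
  have IH: "card Y \<le> 2 * stab_num Y E \<and> fib_index Y E = forest_bound (card Y) (stab_num Y E)"
    if "Y \<subset> X" for Y
    using less.hyps[OF psubset_card_mono[OF f that] _ nl induced_matching_subset[OF m]] that f
    by (meson finite_subset psubset_imp_subset)
  show ?case
  proof (cases "X = {}")
    case True then show ?thesis by (simp add: fib_index_empty stab_num_empty forest_bound_empty)
  next
    case False
    then obtain y where y: "y \<in> X" by auto
    show ?thesis
    proof (cases "nbhd E X y = {}")
      case True
      have "card X = Suc (card (X - {y}))" using card_Suc_Diff1[OF f y] by simp
      moreover have "X - {y} \<subset> X" using y by auto
      ultimately show ?thesis
        using IH[of "X - {y}"] isolated_vertex_delete[OF f nl y True] forest_bound_isolated by auto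
    next
      case False
      then obtain z where z: "z \<in> nbhd E X y" by auto
      have ny: "nbhd E X y = {z}" using induced_matchingD[OF m y z] .
      have zX: "z \<in> X" and yz: "y \<noteq> z" using leaf_neighbour[OF nl ny] by auto
      have "nbhd E X z = {y}" using induced_matchingD[OF m zX nbhd_sym[OF z y]] .
      then have iso: "nbhd E (X - {y}) z = {}" by (simp add: nbhd_Diff)
      have "X - {y} - {z} = X - {y, z}" by auto
      then have F: "fib_index X E = 3 * fib_index (X - {y, z}) E"
        using leaf_delete(1)[OF f nl y ny]
          isolated_vertex_delete(1)[OF _ nl _ iso] f zX yz by simp
      have "stab_num (X - {y, z}) E \<le> card (X - {y, z})" using f by (simp add: stab_num_le_card)
      moreover have "X - {y, z} \<subset> X" using y by auto
      ultimately show ?thesis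
        using IH[of "X - {y, z}"] y F card_Diff_two[OF f y zX yz]
          leaf_delete(2)[OF f nl y ny] forest_bound_edge by auto
    qed
  qed
qed

definition obeys_forest_bound :: "'a set set \<Rightarrow> 'a set \<Rightarrow> bool" where
  "obeys_forest_bound E X \<longleftrightarrow> card X \<le> 2 * stab_num X E \<and>
     fib_index X E \<le> forest_bound (card X) (stab_num X E) \<and>
     (fib_index X E = forest_bound (card X) (stab_num X E) \<longrightarrow> induced_matching E X)"

lemma obeys_forest_bound_isolated_step:
  assumes f: "finite X" and nl: "loopless E" and y: "y \<in> X" and iso: "nbhd E X y = {}"
    and IH: "obeys_forest_bound E (X - {y})"
  shows "obeys_forest_bound E X"
proof -
  have "nbhd E X t \<inter> {y} = {}" if "t \<in> X - {y}" for t
    using iso nbhd_sym[of y E X t] that by auto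
  then have "induced_matching E X" if "induced_matching E (X - {y})"
    using that iso by (intro induced_matching_extend[of E X "{y}"]) auto
  moreover have "card X = Suc (card (X - {y}))" using card_Suc_Diff1[OF f y] by simp
  ultimately show ?thesis
    using IH isolated_vertex_delete[OF f nl y iso] forest_bound_isolated
    unfolding obeys_forest_bound_def by auto
qed

(* If alpha drops by one when the leaf u is deleted and both X - u and X - u - w
   have maximum degree at most one, then the support w sees nothing but u:
   otherwise its partner t would be isolated in X - u - w, which keeps alpha. *)
lemma support_private:
  assumes f: "finite X" and nl: "loopless E" and u: "u \<in> X" and nu: "nbhd E X u = {w}"
    and mY: "induced_matching E (X - {u})"
    and alpha: "stab_num (X - {u}) E = Suc (stab_num (X - {u, w}) E)"
  shows "nbhd E X w \<subseteq> {u}"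
proof
  fix t assume t: "t \<in> nbhd E X w"
  show "t \<in> {u}"
  proof (rule ccontr)
    assume tu: "t \<notin> {u}"
    define Y Z where "Y = X - {u}" and "Z = X - {u, w}"
    have wY: "w \<in> Y" using leaf_neighbour[OF nl nu] unfolding Y_def by auto
    have tY: "t \<in> Y" and tw: "t \<in> nbhd E Y w" using t tu unfolding Y_def nbhd_def by auto
    have nYw: "nbhd E Y w = {t}" using induced_matchingD[OF mY[folded Y_def] wY tw] .
    have "nbhd E Y t = {w}" using induced_matchingD[OF mY[folded Y_def] tY nbhd_sym[OF tw wY]] .
    then have "t \<in> Z" "nbhd E Z t = {}"
      using tY loopless_not_in_nbhd[OF nl, of t] unfolding Y_def Z_def nbhd_Diff by auto
    then have "stab_num Z E = Suc (stab_num (Z - {t}) E)"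
      using isolated_vertex_delete(2)[OF _ nl] f unfolding Z_def by simp
    moreover have "Y - {w} = Z" "Y - insert w (nbhd E Y w) = Z - {t}"
      using nYw unfolding Y_def Z_def by auto
    ultimately have "stab_num Y E = stab_num Z E"
      using stab_num_delete[OF _ nl wY] f unfolding Y_def by simp
    then show False using alpha unfolding Y_def Z_def by simp
  qed
qed

lemma obeys_forest_bound_leaf_step:
  assumes f: "finite X" and nl: "loopless E" and u: "u \<in> X" and nu: "nbhd E X u = {w}"
    and IHY: "obeys_forest_bound E (X - {u})" and IHZ: "obeys_forest_bound E (X - {u, w})"
  shows "obeys_forest_bound E X"
proof -
  define m a \<beta> where "m = card (X - {u, w})" and "a = stab_num (X - {u, w}) E"
    and "\<beta> = stab_num (X - {u}) E"
  have wX: "w \<in> X" and uw: "u \<noteq> w" using leaf_neighbour[OF nl nu] by auto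
  have cX: "card X = m + 2" unfolding m_def using card_Diff_two[OF f u wX uw] .
  have cY: "card (X - {u}) = m + 1" using card_Suc_Diff1[OF f u] cX by simp
  note lf = leaf_delete[OF f nl u nu]
  have aX: "stab_num X E = a + 1" and \<beta>: "a \<le> \<beta>" "\<beta> \<le> a + 1"
    using lf(2-4) unfolding a_def \<beta>_def by auto
  have am: "a \<le> m" unfolding a_def m_def using f by (simp add: stab_num_le_card)
  have mA: "m \<le> 2 * a" using IHZ unfolding obeys_forest_bound_def m_def a_def by simp
  have FZ: "fib_index (X - {u, w}) E \<le> forest_bound m a"
    and FY: "fib_index (X - {u}) E \<le> forest_bound (m + 1) \<beta>"
    using IHY IHZ cY unfolding obeys_forest_bound_def m_def a_def \<beta>_def by auto
  have main: "fib_index X E \<le> forest_bound (m + 2) (a + 1) \<and>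
     (fib_index X E = forest_bound (m + 2) (a + 1) \<longrightarrow> \<beta> = a + 1 \<and>
        fib_index (X - {u}) E = forest_bound (m + 1) \<beta> \<and> fib_index (X - {u, w}) E = forest_bound m a)"
  proof (cases "\<beta> = a + 1")
    case True
    then show ?thesis using lf(1) FY FZ forest_bound_isolated[OF mA] forest_bound_edge[OF mA am] by simp
  next
    case False
    then have "\<beta> = a" "m + 1 \<le> 2 * a"
      using \<beta> IHY cY unfolding obeys_forest_bound_def \<beta>_def by auto
    then show ?thesis using lf(1) FY FZ forest_bound_leaf_gap am by fastforce
  qed
  have "induced_matching E X" if "fib_index X E = forest_bound (m + 2) (a + 1)"
  proof -
    have "\<beta> = a + 1" and mY: "induced_matching E (X - {u})" and mZ: "induced_matching E (X - {u, w})"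
      using main that IHY IHZ cY unfolding obeys_forest_bound_def m_def a_def \<beta>_def by auto
    then have nw: "nbhd E X w \<subseteq> {u}"
      using support_private[OF f nl u nu mY] unfolding a_def \<beta>_def by simp
    have "nbhd E X y \<inter> {u, w} = {}" if "y \<in> X - {u, w}" for y
      using that nu nw nbhd_sym[of u E X y] nbhd_sym[of w E X y] by auto
    then show ?thesis using mZ nu nw by (intro induced_matching_extend[of E X "{u, w}"]) auto
  qed
  then show ?thesis using main cX aX mA unfolding obeys_forest_bound_def by simp
qed

lemma forest_obeys_forest_bound:
  assumes "finite X" "loopless E" "\<not> has_cycle X E"
  shows "obeys_forest_bound E X"
  using assms
proof (induction "card X" arbitrary: X rule: less_induct)
  case less
  note f = less.prems(1) and nl = less.prems(2) and ac = less.prems(3)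
  have IH: "obeys_forest_bound E Y" if "Y \<subset> X" for Y
  proof -
    have "finite Y" "\<not> has_cycle Y E"
      using that f ac has_cycle_mono[of Y E X] finite_subset[of Y X] by auto
    then show ?thesis using less.hyps[OF psubset_card_mono[OF f that]] nl by blast
  qed
  show ?case
  proof (cases "\<exists>a\<in>X. \<exists>b\<in>X. {a, b} \<in> E")
    case True
    then obtain a b where ab: "a \<in> X" "b \<in> X" "{a, b} \<in> E" by blast
    obtain u w x where u: "u \<in> X" and nu: "nbhd E X u = {w}"
      and "\<And>t. t \<in> nbhd E X w - {x} \<Longrightarrow> nbhd E X t = {w}"
      using leaf_with_leafy_support[OF f nl ac ab] by blast
    have "X - {u} \<subset> X" "X - {u, w} \<subset> X" using u by auto
    then show ?thesis using obeys_forest_bound_leaf_step[OF f nl u nu] IH by blast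
  next
    case no_edge: False
    show ?thesis
    proof (cases "X = {}")
      case True
      then show ?thesis
        by (simp add: obeys_forest_bound_def fib_index_empty stab_num_empty forest_bound_empty
            induced_matching_def nbhd_def)
    next
      case False
      then obtain y where y: "y \<in> X" by auto
      then have "nbhd E X y = {}" using no_edge unfolding nbhd_def by auto
      moreover have "X - {y} \<subset> X" using y by auto
      ultimately show ?thesis using obeys_forest_bound_isolated_step[OF f nl y] IH by blast
    qed
  qed
qed

definition adjacent_in :: "'a set set \<Rightarrow> 'a set \<Rightarrow> 'a \<Rightarrow> 'a \<Rightarrow> bool" where
  "adjacent_in E X a b \<longleftrightarrow> a \<in> X \<and> b \<in> X \<and> {a, b} \<in> E"

definition connected_on :: "'a set set \<Rightarrow> 'a set \<Rightarrow> bool" where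
  "connected_on E X \<longleftrightarrow> (\<forall>a\<in>X. \<forall>b\<in>X. (adjacent_in E X)\<^sup>*\<^sup>* a b)"

lemma adjacent_in_walk_sym: "(adjacent_in E X)\<^sup>*\<^sup>* a b \<Longrightarrow> (adjacent_in E X)\<^sup>*\<^sup>* b a"
proof (induction rule: rtranclp_induct)
  case (step y z)
  then have "adjacent_in E X z y" unfolding adjacent_in_def by (simp add: doubleton_sym)
  then show ?case using step.IH by (meson converse_rtranclp_into_rtranclp)
qed simp

lemma connected_graph_connected_on:
  assumes sg: "simple_graph V E" and c: "connected_graph V E"
  shows "connected_on E V"
proof -
  have "(adjacent_in E V)\<^sup>*\<^sup>* x y" if "(\<lambda>a b. {a, b} \<in> E)\<^sup>*\<^sup>* x y" for x y
    using that
  proof (induction rule: rtranclp_induct)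
    case (step y z)
    have "{y, z} \<subseteq> V" using step.hyps(2) sg unfolding simple_graph_def by blast
    then have "adjacent_in E V y z" using step.hyps(2) unfolding adjacent_in_def by simp
    then show ?case using step.IH by (meson rtranclp.rtrancl_into_rtrancl)
  qed simp
  then show ?thesis using c unfolding connected_graph_def connected_on_def by blast
qed

(* Removing a leaf keeps the graph connected: walks from the support w never need u. *)
lemma connected_delete_leaf:
  assumes c: "connected_on E X" and u: "u \<in> X" and n: "nbhd E X u = {w}"
  shows "connected_on E (X - {u})"
proof -
  have wX: "w \<in> X" using n nbhd_subset by fastforce
  have reach: "y = u \<or> (adjacent_in E (X - {u}))\<^sup>*\<^sup>* w y" if "(adjacent_in E X)\<^sup>*\<^sup>* w y" for y
    using that
  proof (induction rule: rtranclp_induct)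
    case (step y t)
    show ?case
    proof (cases "t = u \<or> y = u")
      case True
      then show ?thesis using step.hyps(2) n unfolding adjacent_in_def nbhd_def by auto
    next
      case False
      then have "adjacent_in E (X - {u}) y t" using step.hyps(2) unfolding adjacent_in_def by simp
      then show ?thesis using step.IH False by (meson rtranclp.rtrancl_into_rtrancl)
    qed
  qed simp
  show ?thesis unfolding connected_on_def
  proof (intro ballI)
    fix a b assume "a \<in> X - {u}" "b \<in> X - {u}"
    then have "(adjacent_in E (X - {u}))\<^sup>*\<^sup>* w a" "(adjacent_in E (X - {u}))\<^sup>*\<^sup>* w b"
      using reach c wX unfolding connected_on_def by blast+
    then show "(adjacent_in E (X - {u}))\<^sup>*\<^sup>* a b"
      using adjacent_in_walk_sym by (metis rtranclp_trans)
  qed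
qed

lemma connected_isolated_edge:
  assumes c: "connected_on E X" and u: "u \<in> X" and nu: "nbhd E X u = {w}" and nw: "nbhd E X w = {u}"
  shows "X = {u, w}"
proof -
  have "y \<in> {u, w}" if "(adjacent_in E X)\<^sup>*\<^sup>* u y" for y
    using that
  proof (induction rule: rtranclp_induct)
    case (step y t)
    then have "t \<in> nbhd E X y" unfolding adjacent_in_def nbhd_def by simp
    then show ?case using step.IH nu nw by auto
  qed simp
  moreover have "w \<in> X" using nu nbhd_subset by fastforce
  ultimately show ?thesis using c u unfolding connected_on_def by blast
qed

lemma connected_has_edge:
  assumes c: "connected_on E X" and f: "finite X" and two: "2 \<le> card X"
  obtains a b where "a \<in> X" "b \<in> X" "{a, b} \<in> E"
proof -
  have "\<not> card X \<le> Suc 0" using two by simp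
  then obtain a b where ab: "a \<in> X" "b \<in> X" "a \<noteq> b"
    using card_le_Suc0_iff_eq[OF f] by blast
  have "(adjacent_in E X)\<^sup>*\<^sup>* a b" using c ab unfolding connected_on_def by blast
  then obtain b' where "adjacent_in E X a b'" using ab(3) by (cases rule: converse_rtranclpE) auto
  then show ?thesis using that unfolding adjacent_in_def by blast
qed

definition spider :: "'a set set \<Rightarrow> 'a set \<Rightarrow> 'a \<Rightarrow> bool" where
  "spider E X v \<longleftrightarrow> finite X \<and> loopless E \<and> v \<in> X \<and> induced_matching E (X - {v}) \<and>
    (\<forall>y\<in>X - {v}. {v, y} \<in> E \<or> (\<exists>z\<in>X - {v}. {v, z} \<in> E \<and> {z, y} \<in> E)) \<and>
    (\<forall>y\<in>X - {v}. \<forall>z\<in>X - {v}. {v, y} \<in> E \<longrightarrow> {v, z} \<in> E \<longrightarrow> {y, z} \<notin> E)"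

definition short_legs :: "'a set set \<Rightarrow> 'a set \<Rightarrow> 'a \<Rightarrow> 'a set" where
  "short_legs E X v = {y \<in> X - {v}. nbhd E (X - {v}) y = {}}"

definition knees :: "'a set set \<Rightarrow> 'a set \<Rightarrow> 'a \<Rightarrow> 'a set" where
  "knees E X v = {y \<in> X - {v}. {v, y} \<in> E \<and> nbhd E (X - {v}) y \<noteq> {}}"

definition feet :: "'a set set \<Rightarrow> 'a set \<Rightarrow> 'a \<Rightarrow> 'a set" where
  "feet E X v = {y \<in> X - {v}. {v, y} \<notin> E}"

definition partner :: "'a set set \<Rightarrow> 'a set \<Rightarrow> 'a \<Rightarrow> 'a \<Rightarrow> 'a" where
  "partner E X v y = the_elem (nbhd E (X - {v}) y)"

(* A tree in which X - v has maximum degree at most one is a spider with centre v: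
   a walk from v never gets beyond the partner of a neighbour of v, and a
   triangle through v would be a cycle. *)
lemma tree_spider:
  assumes f: "finite X" and nl: "loopless E" and c: "connected_on E X" and ac: "\<not> has_cycle X E"
    and v: "v \<in> X" and m: "induced_matching E (X - {v})"
  shows "spider E X v"
proof -
  have near: "y = v \<or> {v, y} \<in> E \<or> (\<exists>z\<in>X - {v}. {v, z} \<in> E \<and> {z, y} \<in> E)"
    if "(adjacent_in E X)\<^sup>*\<^sup>* v y" for y
    using that
  proof (induction rule: rtranclp_induct)
    case (step y t)
    have yX: "y \<in> X" and tX: "t \<in> X" and yt: "{y, t} \<in> E"
      using step.hyps(2) unfolding adjacent_in_def by auto
    show ?case
    proof (cases "t = v \<or> y = v")
      case True then show ?thesis using yt by auto
    next
      case False
      show ?thesis using step.IH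
      proof (elim disjE)
        assume "{v, y} \<in> E" then show ?thesis using yt yX False by auto
      next
        assume "\<exists>z\<in>X - {v}. {v, z} \<in> E \<and> {z, y} \<in> E"
        then obtain z where z: "z \<in> X - {v}" "{v, z} \<in> E" "{z, y} \<in> E" by blast
        have "t \<in> nbhd E (X - {v}) y" "z \<in> nbhd E (X - {v}) y" "y \<in> X - {v}"
          using tX yt z yX False unfolding nbhd_def by (auto simp: doubleton_sym)
        then have "t = z" using m unfolding induced_matching_def by blast
        then show ?thesis using z by simp
      qed (use False in simp)
    qed
  qed simp
  have "{y, z} \<notin> E" if "y \<in> X - {v}" "z \<in> X - {v}" "{v, y} \<in> E" "{v, z} \<in> E" for y z
  proof
    assume yz: "{y, z} \<in> E"
    then have "y \<noteq> z" using loopless_edge_ends[OF nl] by blast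
    then have "has_cycle X E" unfolding has_cycle_def using that v yz
      by (intro exI[of _ "[v, y, z]"]) (auto simp: less_Suc_eq nth_Cons' doubleton_sym)
    then show False using ac by simp
  qed
  then show ?thesis using near c v f nl m unfolding spider_def connected_on_def by blast
qed

context
  fixes E :: "'a set set" and X :: "'a set" and v :: 'a
  assumes sp: "spider E X v"
begin

lemma spider_finite: "finite X" and spider_loopless: "loopless E" and spider_centre: "v \<in> X"
  and spider_matching: "induced_matching E (X - {v})"
  using sp by (simp_all add: spider_def)

lemma spider_near: "y \<in> X - {v} \<Longrightarrow> {v, y} \<in> E \<or> (\<exists>z\<in>X - {v}. {v, z} \<in> E \<and> {z, y} \<in> E)"
  using sp by (simp add: spider_def)

lemma spider_no_triangle: "y \<in> X - {v} \<Longrightarrow> z \<in> X - {v} \<Longrightarrow> {v, y} \<in> E \<Longrightarrow> {v, z} \<in> E \<Longrightarrow> {y, z} \<notin> E"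
  using sp unfolding spider_def by blast

lemma short_leg_adjacent: "y \<in> short_legs E X v \<Longrightarrow> {v, y} \<in> E"
  using spider_near unfolding short_legs_def nbhd_def by (fastforce simp: doubleton_sym)

lemma foot_partner: "y \<in> feet E X v \<Longrightarrow> \<exists>z. nbhd E (X - {v}) y = {z} \<and> z \<in> knees E X v"
proof -
  assume y: "y \<in> feet E X v"
  then have yX: "y \<in> X - {v}" and "{v, y} \<notin> E" by (auto simp: feet_def)
  then obtain z where z: "z \<in> X - {v}" "{v, z} \<in> E" "{z, y} \<in> E" using spider_near by blast
  then have zn: "z \<in> nbhd E (X - {v}) y" unfolding nbhd_def by (simp add: doubleton_sym)
  have "y \<in> nbhd E (X - {v}) z" using nbhd_sym[OF zn yX] .
  then have "z \<in> knees E X v" using z unfolding knees_def by auto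
  then show ?thesis using induced_matchingD[OF spider_matching yX zn] by blast
qed

lemma knee_partner:
  assumes y: "y \<in> knees E X v"
  shows "nbhd E (X - {v}) y = {partner E X v y}" "partner E X v y \<in> feet E X v"
proof -
  have yX: "y \<in> X - {v}" and vy: "{v, y} \<in> E" and "nbhd E (X - {v}) y \<noteq> {}"
    using y by (auto simp: knees_def)
  then obtain z where zn: "z \<in> nbhd E (X - {v}) y" by auto
  have nz: "nbhd E (X - {v}) y = {z}" using induced_matchingD[OF spider_matching yX zn] .
  then show "nbhd E (X - {v}) y = {partner E X v y}" unfolding partner_def by simp
  have zX: "z \<in> X - {v}" and "{y, z} \<in> E" using zn unfolding nbhd_def by auto
  then have "{v, z} \<notin> E" using spider_no_triangle[OF yX zX vy] by blast
  then show "partner E X v y \<in> feet E X v" using zX nz unfolding feet_def partner_def by simp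
qed

lemma knee_partner_edge: "y \<in> knees E X v \<Longrightarrow> {y, partner E X v y} \<in> E"
proof -
  assume "y \<in> knees E X v"
  then have "partner E X v y \<in> nbhd E (X - {v}) y" using knee_partner(1) by simp
  then show ?thesis by (simp add: nbhd_def)
qed

lemma partner_inj: "inj_on (partner E X v) (knees E X v)"
proof (rule inj_onI)
  fix a b assume a: "a \<in> knees E X v" and b: "b \<in> knees E X v"
    and e: "partner E X v a = partner E X v b"
  define z where "z = partner E X v a"
  have za: "z \<in> nbhd E (X - {v}) a" and zb: "z \<in> nbhd E (X - {v}) b"
    using knee_partner(1)[OF a] knee_partner(1)[OF b] e unfolding z_def by auto
  have "a \<in> X - {v}" "b \<in> X - {v}" using a b by (auto simp: knees_def)
  then have "a \<in> nbhd E (X - {v}) z" "b \<in> nbhd E (X - {v}) z"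
    using nbhd_sym[OF za] nbhd_sym[OF zb] by auto
  moreover have "z \<in> X - {v}" using za by (simp add: nbhd_def)
  ultimately show "a = b" using spider_matching unfolding induced_matching_def by blast
qed

lemma partner_bij: "bij_betw (partner E X v) (knees E X v) (feet E X v)"
proof -
  have "feet E X v \<subseteq> partner E X v ` knees E X v"
  proof
    fix y assume y: "y \<in> feet E X v"
    then obtain z where z: "nbhd E (X - {v}) y = {z}" "z \<in> knees E X v" using foot_partner by blast
    have "y \<in> nbhd E (X - {v}) z" using nbhd_sym[of z E "X - {v}" y] z y by (auto simp: feet_def)
    then have "partner E X v z = y" using knee_partner(1)[OF z(2)] by simp
    then show "y \<in> partner E X v ` knees E X v" using z(2) by blast
  qed
  moreover have "partner E X v ` knees E X v \<subseteq> feet E X v"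
    using knee_partner(2) by (rule image_subsetI)
  ultimately show ?thesis using partner_inj unfolding bij_betw_def by (intro conjI subset_antisym)
qed

lemma spider_parts: "X - {v} = short_legs E X v \<union> knees E X v \<union> feet E X v"
  using short_leg_adjacent unfolding short_legs_def knees_def feet_def by auto

lemma spider_parts_disjoint:
  "short_legs E X v \<inter> knees E X v = {}" "short_legs E X v \<inter> feet E X v = {}"
  "knees E X v \<inter> feet E X v = {}"
  using short_leg_adjacent unfolding short_legs_def knees_def feet_def by auto

lemma spider_parts_finite:
  "finite (short_legs E X v)" "finite (knees E X v)" "finite (feet E X v)"
  using spider_finite unfolding short_legs_def knees_def feet_def by auto

lemma card_knees: "card (knees E X v) = card (feet E X v)"
  using partner_bij bij_betw_same_card by blast

lemma card_spider: "card X = 1 + card (short_legs E X v) + 2 * card (feet E X v)"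
proof -
  have "card (X - {v}) = card (short_legs E X v \<union> knees E X v) + card (feet E X v)"
    unfolding spider_parts using spider_parts_finite spider_parts_disjoint
    by (intro card_Un_disjoint) auto
  also have "card (short_legs E X v \<union> knees E X v) = card (short_legs E X v) + card (knees E X v)"
    using spider_parts_finite spider_parts_disjoint by (intro card_Un_disjoint) auto
  finally have "card (X - {v}) = card (short_legs E X v) + card (knees E X v) + card (feet E X v)" .
  then show ?thesis using card_knees card_Suc_Diff1[OF spider_finite spider_centre] by simp
qed

lemma feet_edgeless: "a \<in> feet E X v \<Longrightarrow> b \<in> feet E X v \<Longrightarrow> {a, b} \<notin> E"
proof
  assume a: "a \<in> feet E X v" and b: "b \<in> feet E X v" and e: "{a, b} \<in> E"
  obtain z where z: "nbhd E (X - {v}) a = {z}" "z \<in> knees E X v" using foot_partner[OF a] by blast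
  have "b \<in> nbhd E (X - {v}) a" using b e unfolding feet_def nbhd_def by simp
  then have "b \<in> knees E X v" using z by simp
  then show False using b spider_parts_disjoint(3) by blast
qed

lemma legs_feet_stable: "stable_set (X - {v}) E (short_legs E X v \<union> feet E X v)"
  unfolding stable_set_def
proof (intro conjI ballI)
  show "short_legs E X v \<union> feet E X v \<subseteq> X - {v}" using spider_parts by blast
  fix a b assume a: "a \<in> short_legs E X v \<union> feet E X v" and b: "b \<in> short_legs E X v \<union> feet E X v"
  show "{a, b} \<notin> E"
  proof
    assume e: "{a, b} \<in> E"
    have "a \<in> X - {v}" "b \<in> X - {v}" using a b spider_parts by blast+
    then have "b \<in> nbhd E (X - {v}) a" "a \<in> nbhd E (X - {v}) b"
      using e unfolding nbhd_def by (auto simp: doubleton_sym)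
    then have "a \<notin> short_legs E X v" "b \<notin> short_legs E X v"
      unfolding short_legs_def by auto
    then show False using a b e feet_edgeless by blast
  qed
qed

(* alpha(X - v) = #short legs + #feet: any stable set of X - v injects into the
   short legs and feet by moving each knee to its foot. *)
lemma stab_num_spider_body: "stab_num (X - {v}) E = card (short_legs E X v) + card (feet E X v)"
proof -
  let ?L = "short_legs E X v \<union> feet E X v"
  have fin: "finite (X - {v})" using spider_finite by simp
  have cardL: "card ?L = card (short_legs E X v) + card (feet E X v)"
    using spider_parts_finite spider_parts_disjoint by (intro card_Un_disjoint) auto
  have ge: "card ?L \<le> stab_num (X - {v}) E" using stab_num_ge[OF fin legs_feet_stable] .
  obtain S where S: "stable_set (X - {v}) E S" "card S = stab_num (X - {v}) E"
    using stab_num_attained[OF fin] by blast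
  define \<phi> where "\<phi> y = (if y \<in> knees E X v then partner E X v y else y)" for y
  have no_pair: "partner E X v y \<notin> S" if "y \<in> S" "y \<in> knees E X v" for y
    using S(1) knee_partner_edge that unfolding stable_set_def by blast
  have "inj_on \<phi> S"
  proof (rule inj_onI)
    fix a b assume a: "a \<in> S" and b: "b \<in> S" and e: "\<phi> a = \<phi> b"
    consider "a \<in> knees E X v" "b \<in> knees E X v" | "a \<in> knees E X v" "b \<notin> knees E X v"
      | "a \<notin> knees E X v" "b \<in> knees E X v" | "a \<notin> knees E X v" "b \<notin> knees E X v"
      by blast
    then show "a = b"
    proof cases
      case 1 then show ?thesis using e partner_inj unfolding \<phi>_def inj_on_def by simp
    next
      case 2 then show ?thesis using e no_pair[OF a] b unfolding \<phi>_def by simp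
    next
      case 3 then show ?thesis using e no_pair[OF b] a unfolding \<phi>_def by simp
    next
      case 4 then show ?thesis using e unfolding \<phi>_def by simp
    qed
  qed
  moreover have "\<phi> y \<in> ?L" if "y \<in> S" for y
  proof (cases "y \<in> knees E X v")
    case True then show ?thesis using knee_partner(2) unfolding \<phi>_def by simp
  next
    case False
    then show ?thesis using that stable_subset[OF S(1)] spider_parts unfolding \<phi>_def by auto
  qed
  then have "\<phi> ` S \<subseteq> ?L" by blast
  moreover have "finite ?L" using spider_parts_finite by simp
  ultimately have "card S \<le> card ?L" by (rule card_inj_on_le)
  then show ?thesis using ge S(2) cardL by simp
qed

lemma spider_far_part: "X - insert v (nbhd E X v) = feet E X v"
  unfolding feet_def nbhd_def by auto

lemma stab_num_spider:
  "stab_num X E = max (card (short_legs E X v) + card (feet E X v)) (1 + card (feet E X v))"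
  using stab_num_delete[OF spider_finite spider_loopless spider_centre] spider_far_part
    edgeless_fib_stab(2)[OF spider_parts_finite(3) feet_edgeless] stab_num_spider_body by simp

lemma spider_fib:
  assumes "short_legs E X v \<noteq> {}"
  shows "stab_num X E = card (short_legs E X v) + card (feet E X v)"
    and "fib_index X E = tree_bound (card X) (stab_num X E)"
proof -
  have s1: "1 \<le> card (short_legs E X v)"
    using assms spider_parts_finite(1) by (simp add: Suc_le_eq card_gt_0_iff)
  then show alpha: "stab_num X E = card (short_legs E X v) + card (feet E X v)"
    using stab_num_spider by simp
  have "card (X - {v}) = card (short_legs E X v) + 2 * card (feet E X v)"
    using card_spider card_Suc_Diff1[OF spider_finite spider_centre] by simp
  then have "fib_index (X - {v}) E =
      forest_bound (card (short_legs E X v) + 2 * card (feet E X v)) (stab_num X E)"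
    using induced_matching_fib[OF _ spider_loopless spider_matching] spider_finite
      stab_num_spider_body alpha by simp
  then show "fib_index X E = tree_bound (card X) (stab_num X E)"
    using fib_index_delete[OF spider_finite spider_loopless spider_centre] spider_far_part
      edgeless_fib_stab(1)[OF spider_parts_finite(3) feet_edgeless]
      tree_bound_spider[OF s1] alpha card_spider by simp
qed

end

lemma stab_num_lt_card:
  assumes f: "finite X" and e: "a \<in> X" "b \<in> X" "{a, b} \<in> E"
  shows "stab_num X E < card X"
proof -
  obtain S where S: "stable_set X E S" "card S = stab_num X E"
    using stab_num_attained[OF f] by blast
  then have "S \<noteq> X" using e unfolding stable_set_def by blast
  then have "S \<subset> X" using stable_subset[OF S(1)] by blast
  then show ?thesis using psubset_card_mono[OF f \<open>S \<subset> X\<close>] S(2) by simp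
qed

lemma two_le_card: "finite X \<Longrightarrow> a \<in> X \<Longrightarrow> b \<in> X \<Longrightarrow> a \<noteq> b \<Longrightarrow> 2 \<le> card X"
  using card_mono[of X "{a, b}"] by simp

lemma tree_stab_num_range:
  assumes f: "finite X" and nl: "loopless E" and c: "connected_on E X" and ac: "\<not> has_cycle X E"
    and two: "2 \<le> card X"
  shows "card X \<le> 2 * stab_num X E" "stab_num X E \<le> card X - 1"
proof -
  show "card X \<le> 2 * stab_num X E"
    using forest_obeys_forest_bound[OF f nl ac] unfolding obeys_forest_bound_def by simp
  obtain a b where "a \<in> X" "b \<in> X" "{a, b} \<in> E" by (rule connected_has_edge[OF c f two])
  then have "stab_num X E < card X" by (rule stab_num_lt_card[OF f])
  then show "stab_num X E \<le> card X - 1" by simp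
qed

definition spider_centre :: "'a set set \<Rightarrow> 'a set \<Rightarrow> 'a \<Rightarrow> bool" where
  "spider_centre E X v \<longleftrightarrow> v \<in> X \<and> induced_matching E (X - {v}) \<and> short_legs E X v \<noteq> {}"

definition obeys_tree_bound :: "'a set set \<Rightarrow> 'a set \<Rightarrow> bool" where
  "obeys_tree_bound E X \<longleftrightarrow> fib_index X E \<le> tree_bound (card X) (stab_num X E) \<and>
     (fib_index X E = tree_bound (card X) (stab_num X E) \<longrightarrow> (\<exists>v. spider_centre E X v))"

lemma spider_centre_obeys_tree_bound:
  assumes "finite X" "loopless E" "connected_on E X" "\<not> has_cycle X E" "spider_centre E X v"
  shows "obeys_tree_bound E X" "fib_index X E = tree_bound (card X) (stab_num X E)"
proof -
  have v: "v \<in> X" "induced_matching E (X - {v})" "short_legs E X v \<noteq> {}"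
    using assms(5) unfolding spider_centre_def by auto
  have "spider E X v" by (rule tree_spider[OF assms(1-4) v(1,2)])
  then show F: "fib_index X E = tree_bound (card X) (stab_num X E)" by (rule spider_fib(2)[OF _ v(3)])
  show "obeys_tree_bound E X" using F assms(5) unfolding obeys_tree_bound_def by auto
qed

lemma small_tree_spider_centre:
  assumes nl: "loopless E" and u: "u \<in> X" and nu: "nbhd E X u = {w}" and small: "X \<subseteq> {u, w, x}"
  shows "spider_centre E X w"
proof -
  have wX: "w \<in> X" and uw: "u \<noteq> w" using leaf_neighbour[OF nl nu] by auto
  have "{a, b} \<notin> E" if "a \<in> X - {w}" "b \<in> X - {w}" for a b
  proof
    assume ab: "{a, b} \<in> E"
    then have "a \<noteq> b" using loopless_edge_ends[OF nl] by blast
    then have "(a = u \<and> b = x) \<or> (a = x \<and> b = u)" using that small by blast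
    then have "{u, x} \<in> E" "x \<in> X" "x \<noteq> w" using ab that by (auto simp: doubleton_sym)
    then have "x \<in> nbhd E X u" by (simp add: nbhd_def)
    then show False using nu \<open>x \<noteq> w\<close> by simp
  qed
  then have "nbhd E (X - {w}) y = {}" if "y \<in> X - {w}" for y
    using that unfolding nbhd_def by blast
  then have "induced_matching E (X - {w})" "u \<in> short_legs E X w"
    using u uw unfolding induced_matching_def short_legs_def by auto
  then show ?thesis using wX unfolding spider_centre_def by blast
qed

lemma leaf_support_spider_centre:
  assumes nl: "loopless E" and u: "u \<in> X" and nu: "nbhd E X u = {w}"
    and m: "induced_matching E (X - {u, w})"
  shows "spider_centre E X w"
proof -
  have wX: "w \<in> X" and uw: "u \<noteq> w" using leaf_neighbour[OF nl nu] by auto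
  have nu': "nbhd E (X - {w}) u = {}" using nu by (simp add: nbhd_Diff)
  have "X - {w} - {u} = X - {u, w}" by auto
  then have "induced_matching E (X - {w} - {u})" using m by simp
  moreover have "nbhd E (X - {w}) y \<inter> {u} = {}" if "y \<in> X - {w} - {u}" for y
    using that nbhd_sym[of u E "X - {w}" y] nu' by auto
  ultimately have "induced_matching E (X - {w})"
    using nu' by (intro induced_matching_extend[of E "X - {w}" "{u}"]) auto
  moreover have "u \<in> short_legs E X w" using u uw nu' unfolding short_legs_def by simp
  ultimately show ?thesis using wX unfolding spider_centre_def by blast
qed

(* Induction step when the support w of the leaf u carries a second leaf u':
   then alpha(X - u) = alpha(X - u - w), and the forest bound on X - u - w
   completes the count; equality makes w a spider centre. *)
lemma obeys_tree_bound_twin_leaves: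
  assumes f: "finite X" and nl: "loopless E" and c: "connected_on E X" and ac: "\<not> has_cycle X E"
    and u: "u \<in> X" and nu: "nbhd E X u = {w}"
    and u': "u' \<in> nbhd E X w" "u' \<noteq> u" "nbhd E X u' = {w}"
    and IH: "obeys_tree_bound E (X - {u})"
  shows "obeys_tree_bound E X"
proof -
  define Y Z where "Y = X - {u}" and "Z = X - {u, w}"
  have wX: "w \<in> X" and uw: "u \<noteq> w" using leaf_neighbour[OF nl nu] by auto
  have u'X: "u' \<in> X" using u'(1) by (simp add: nbhd_def)
  have u'w: "u' \<noteq> w" using leaf_neighbour[OF nl u'(3)] by auto
  have fY: "finite Y" and fZ: "finite Z" using f unfolding Y_def Z_def by auto
  have acY: "\<not> has_cycle Y E" and acZ: "\<not> has_cycle Z E"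
    using ac has_cycle_mono[of Y E X] has_cycle_mono[of Z E X] unfolding Y_def Z_def by auto
  have u'Y: "u' \<in> Y" and wY: "w \<in> Y" and nYu': "nbhd E Y u' = {w}"
    using u'X u' uw wX unfolding Y_def nbhd_Diff by auto
  have u'Z: "u' \<in> Z" and nZu': "nbhd E Z u' = {}"
    using u'X u' u'w unfolding Z_def nbhd_Diff by auto
  define m a where "m = card Z" and "a = stab_num Z E"
  have "Y - {u', w} = Z - {u'}" unfolding Y_def Z_def by auto
  then have aY: "stab_num Y E = a" unfolding a_def
    using leaf_delete(2)[OF fY nl u'Y nYu'] isolated_vertex_delete(2)[OF fZ nl u'Z nZu'] by simp
  have aX: "stab_num X E = a + 1" using leaf_delete(2)[OF f nl u nu] unfolding Z_def a_def by simp
  have cX: "card X = m + 2" and cY: "card Y = m + 1"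
    using card_Diff_two[OF f u wX uw] card_Suc_Diff1[OF f u] unfolding m_def Y_def Z_def by auto
  have "connected_on E Y" using connected_delete_leaf[OF c u nu] unfolding Y_def .
  note range = tree_stab_num_range[OF fY nl this acY two_le_card[OF fY u'Y wY u'w]]
  have "m + 1 \<le> 2 * a" "a \<le> m" using range aY cY by auto
  note numeric = tree_bound_two_leaves[OF this]
  have FZ: "fib_index Z E \<le> forest_bound m a"
    and mZ: "fib_index Z E = forest_bound m a \<Longrightarrow> induced_matching E Z"
    using forest_obeys_forest_bound[OF fZ nl acZ] unfolding obeys_forest_bound_def m_def a_def by auto
  have FY: "fib_index Y E \<le> tree_bound (m + 1) a"
    using IH aY cY unfolding obeys_tree_bound_def Y_def by simp
  have FX: "fib_index X E = fib_index Y E + fib_index Z E"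
    using leaf_delete(1)[OF f nl u nu] unfolding Y_def Z_def by simp
  have le: "fib_index X E \<le> tree_bound (card X) (stab_num X E)"
    using FX FY FZ numeric cX aX by simp
  have "spider_centre E X w" if "fib_index X E = tree_bound (card X) (stab_num X E)"
  proof -
    have "fib_index Z E = forest_bound m a" using that FX FY FZ numeric cX aX by simp
    then show ?thesis using leaf_support_spider_centre[OF nl u nu] mZ unfolding Z_def by simp
  qed
  then show ?thesis using le unfolding obeys_tree_bound_def by blast
qed

lemma pendant_path_nbhd:
  assumes "nbhd E X u = {w}" "nbhd E X w = {u, x}" "s \<in> X - {u, w, x}"
  shows "nbhd E (X - {x}) s = nbhd E (X - {u, w} - {x}) s"
proof -
  have "u \<notin> nbhd E X s" "w \<notin> nbhd E X s"
    using assms nbhd_sym[of u E X s] nbhd_sym[of w E X s] by auto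
  then show ?thesis by (auto simp: nbhd_Diff)
qed

(* Equality case of the pendant-path step: if T = X - {u, w} is a spider centred at
   x whose alpha does not drop when x is deleted, then T has a short leg, and x is
   a spider centre of X as well (u becomes a knee, w its foot). *)
lemma pendant_path_spider_centre:
  assumes u: "u \<in> X" and nu: "nbhd E X u = {w}" and nw: "nbhd E X w = {u, x}"
    and sp: "spider E (X - {u, w}) x"
    and alpha: "stab_num (X - {u, w} - {x}) E = stab_num (X - {u, w}) E"
  shows "spider_centre E X x"
proof -
  define T where "T = X - {u, w}"
  have xT: "x \<in> T" using spider_centre[OF sp] unfolding T_def .
  have "short_legs E T x \<noteq> {}"
  proof
    assume "short_legs E T x = {}"
    then show False using stab_num_spider[OF sp] stab_num_spider_body[OF sp] alpha
      unfolding T_def by simp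
  qed
  then obtain y where y: "y \<in> T - {x}" "nbhd E (T - {x}) y = {}"
    unfolding short_legs_def by blast
  then have "y \<in> short_legs E X x"
    using pendant_path_nbhd[OF nu nw, of y] unfolding T_def short_legs_def by auto
  moreover have "induced_matching E (X - {x})"
  proof (rule induced_matching_extend[of E "X - {x}" "{u, w}"])
    have "X - {x} - {u, w} = T - {x}" unfolding T_def by auto
    then show "induced_matching E (X - {x} - {u, w})"
      using spider_matching[OF sp] unfolding T_def by simp
    show "nbhd E (X - {x}) s \<inter> {u, w} = {}" if "s \<in> X - {x} - {u, w}" for s
      using pendant_path_nbhd[OF nu nw, of s] that by (auto simp: nbhd_def)
    show "\<exists>c. nbhd E (X - {x}) s \<subseteq> {c}" if "s \<in> (X - {x}) \<inter> {u, w}" for s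
      using that nu nw by (auto simp: nbhd_Diff)
  qed
  moreover have "x \<in> X" using xT unfolding T_def by simp
  ultimately show ?thesis unfolding spider_centre_def by blast
qed

lemma pendant_path_delete:
  assumes f: "finite X" and nl: "loopless E" and u: "u \<in> X" and nu: "nbhd E X u = {w}"
    and nw: "nbhd E X w = {u, x}" and xu: "x \<noteq> u"
  shows "fib_index X E = 2 * fib_index (X - {u, w}) E + fib_index (X - {u, w} - {x}) E"
    and "stab_num X E = stab_num (X - {u, w}) E + 1" and "card X = card (X - {u, w}) + 2"
    and "x \<in> X - {u, w}" and "w \<in> X - {u}" and "nbhd E (X - {u}) w = {x}"
proof -
  have wX: "w \<in> X" and uw: "u \<noteq> w" using leaf_neighbour[OF nl nu] by auto
  have "x \<in> nbhd E X w" using nw by simp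
  then show "x \<in> X - {u, w}" using xu loopless_not_in_nbhd[OF nl] by (auto simp: nbhd_def)
  show wY: "w \<in> X - {u}" and nYw: "nbhd E (X - {u}) w = {x}"
    using wX uw nw xu by (auto simp: nbhd_Diff)
  have "X - {u} - {w} = X - {u, w}" "X - {u} - {w, x} = X - {u, w} - {x}" by auto
  then show "fib_index X E = 2 * fib_index (X - {u, w}) E + fib_index (X - {u, w} - {x}) E"
    using leaf_delete(1)[OF f nl u nu] leaf_delete(1)[OF _ nl wY nYw] f by simp
  show "stab_num X E = stab_num (X - {u, w}) E + 1" "card X = card (X - {u, w}) + 2"
    using leaf_delete(2)[OF f nl u nu] card_Diff_two[OF f u wX uw] by auto
qed

(* Induction step when the support w has exactly one further neighbour x: the tree
   bound on T = X - {u, w} and the forest bound on T - x give the claim, and in the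
   equality case T - x has the same alpha as T and maximum degree at most one. *)
lemma obeys_tree_bound_pendant_path:
  assumes f: "finite X" and nl: "loopless E" and c: "connected_on E X" and ac: "\<not> has_cycle X E"
    and u: "u \<in> X" and nu: "nbhd E X u = {w}" and nw: "nbhd E X w = {u, x}" and xu: "x \<noteq> u"
    and T2: "2 \<le> card (X - {u, w})" and IH: "obeys_tree_bound E (X - {u, w})"
  shows "obeys_tree_bound E X"
proof -
  define T where "T = X - {u, w}"
  note pd = pendant_path_delete[OF f nl u nu nw xu, folded T_def]
  have fT: "finite T" and fTx: "finite (T - {x})" using f unfolding T_def by auto
  have acT: "\<not> has_cycle T E" and acTx: "\<not> has_cycle (T - {x}) E"
    using ac has_cycle_mono[of T E X] has_cycle_mono[of "T - {x}" E X] unfolding T_def by auto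
  have "X - {u} - {w} = T" unfolding T_def by auto
  then have cT: "connected_on E T" using connected_delete_leaf[OF connected_delete_leaf[OF c u nu] pd(5,6)]
    by simp
  define m a b where "m = card T" and "a = stab_num T E" and "b = stab_num (T - {x}) E"
  have cTx: "card (T - {x}) = m - 1" using pd(4) fT unfolding m_def by simp
  have "2 \<le> card T" using T2 unfolding T_def .
  then have h: "m \<le> 2 * a" "a + 1 \<le> m"
    using tree_stab_num_range[OF fT nl cT acT] unfolding m_def a_def by auto
  have ba: "b \<le> a" unfolding a_def b_def using fT by (intro stab_num_mono) auto
  have hb: "m - 1 \<le> 2 * b" and FTx: "fib_index (T - {x}) E \<le> forest_bound (m - 1) b"
    and mTx: "fib_index (T - {x}) E = forest_bound (m - 1) b \<Longrightarrow> induced_matching E (T - {x})"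
    using forest_obeys_forest_bound[OF fTx nl acTx] cTx unfolding obeys_forest_bound_def b_def by auto
  have mono: "forest_bound (m - 1) b \<le> forest_bound (m - 1) a"
    using forest_bound_mono[OF hb ba] h by simp
  have FT: "fib_index T E \<le> tree_bound m a" using IH unfolding obeys_tree_bound_def T_def m_def a_def by simp
  note numeric = tree_bound_pendant_path[OF h]
  have le: "fib_index X E \<le> tree_bound (card X) (stab_num X E)"
    using pd(1-3) FTx FT mono numeric unfolding m_def a_def by simp
  have "spider_centre E X x" if eq: "fib_index X E = tree_bound (card X) (stab_num X E)"
  proof -
    have eqTx: "fib_index (T - {x}) E = forest_bound (m - 1) a"
      using eq pd(1-3) FTx FT mono numeric unfolding m_def a_def by simp
    have "b = a"
    proof (rule ccontr)
      assume "b \<noteq> a"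
      then have "forest_bound (m - 1) b < forest_bound (m - 1) a"
        using forest_bound_strict_mono[OF hb] ba h by simp
      then show False using FTx eqTx by simp
    qed
    then have "induced_matching E (T - {x})" using mTx eqTx by simp
    then have "spider E T x" by (rule tree_spider[OF fT nl cT acT pd(4)])
    then show ?thesis
      using pendant_path_spider_centre[OF u nu nw] \<open>b = a\<close> unfolding T_def a_def b_def by blast
  qed
  then show ?thesis using le unfolding obeys_tree_bound_def by blast
qed

lemma leafy_support_cases:
  assumes c: "connected_on E X" and u: "u \<in> X" and nu: "nbhd E X u = {w}"
    and leafy: "\<And>t. t \<in> nbhd E X w - {x} \<Longrightarrow> nbhd E X t = {w}"
  obtains (twin) u' where "u' \<in> nbhd E X w" "u' \<noteq> u" "nbhd E X u' = {w}"
    | (small) "X \<subseteq> {u, w, x}"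
    | (pendant) "nbhd E X w = {u, x}" "x \<noteq> u" "\<not> X \<subseteq> {u, w, x}"
proof (cases "\<exists>u'. u' \<in> nbhd E X w \<and> u' \<noteq> u \<and> nbhd E X u' = {w}")
  case False
  have uw: "u \<in> nbhd E X w" using nbhd_sym[of w E X u] nu u by simp
  have sub: "nbhd E X w \<subseteq> {u, x}" using False leafy by blast
  show ?thesis
  proof (cases "X \<subseteq> {u, w, x}")
    case True
    then show ?thesis by (rule that(2))
  next
    case big: False
    then have "nbhd E X w \<noteq> {u}" using connected_isolated_edge[OF c u nu] by blast
    then have "x \<in> nbhd E X w" "x \<noteq> u" using sub uw by auto
    then have "nbhd E X w = {u, x}" using sub uw by auto
    then show ?thesis using that(3) big \<open>x \<noteq> u\<close> by blast
  qed
qed (use that(1) in blast)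

(* Take a leaf u whose support w has all neighbours but at most one (x) leaves and
   apply the induction step matching the shape of the tree around u. *)
lemma tree_obeys_tree_bound:
  assumes "finite X" "loopless E" "connected_on E X" "\<not> has_cycle X E" "2 \<le> card X"
  shows "obeys_tree_bound E X"
  using assms
proof (induction "card X" arbitrary: X rule: less_induct)
  case less
  note f = less.prems(1) and nl = less.prems(2) and c = less.prems(3) and ac = less.prems(4)
  have IH: "obeys_tree_bound E Y" if "Y \<subset> X" "connected_on E Y" "2 \<le> card Y" for Y
  proof -
    have "finite Y" "\<not> has_cycle Y E"
      using that(1) f ac has_cycle_mono[of Y E X] finite_subset[of Y X] by auto
    then show ?thesis using less.hyps[OF psubset_card_mono[OF f that(1)]] nl that(2,3) by blast
  qed
  obtain a b where "a \<in> X" "b \<in> X" "{a, b} \<in> E" by (rule connected_has_edge[OF c f less.prems(5)])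
  then obtain u w x where u: "u \<in> X" and nu: "nbhd E X u = {w}"
    and leafy: "\<And>t. t \<in> nbhd E X w - {x} \<Longrightarrow> nbhd E X t = {w}"
    using leaf_with_leafy_support[OF f nl ac] by metis
  have wX: "w \<in> X" and uw: "u \<noteq> w" using leaf_neighbour[OF nl nu] by auto
  have cY: "connected_on E (X - {u})" using connected_delete_leaf[OF c u nu] .
  consider (twin) u' where "u' \<in> nbhd E X w" "u' \<noteq> u" "nbhd E X u' = {w}"
    | (small) "X \<subseteq> {u, w, x}"
    | (pendant) "nbhd E X w = {u, x}" "x \<noteq> u" "\<not> X \<subseteq> {u, w, x}"
    using leafy_support_cases[OF c u nu leafy] by blast
  then show ?case
  proof cases
    case (twin u')
    have "u' \<in> X - {u}" "w \<in> X - {u}" "u' \<noteq> w"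
      using twin wX uw leaf_neighbour[OF nl twin(3)] by (auto simp: nbhd_def)
    then have "2 \<le> card (X - {u})" using two_le_card[of "X - {u}" u' w] f by blast
    moreover have "X - {u} \<subset> X" using u by auto
    ultimately have "obeys_tree_bound E (X - {u})" using IH cY by blast
    then show ?thesis using obeys_tree_bound_twin_leaves[OF f nl c ac u nu twin] by blast
  next
    case small
    then show ?thesis
      using spider_centre_obeys_tree_bound(1)[OF f nl c ac small_tree_spider_centre[OF nl u nu]] by blast
  next
    case pendant
    note pd = pendant_path_delete[OF f nl u nu pendant(1,2)]
    obtain y where "y \<in> X - {u, w}" "y \<noteq> x" using pendant(3) by blast
    then have T2: "2 \<le> card (X - {u, w})" using two_le_card[of "X - {u, w}" x y] pd(4) f by blast
    have "X - {u} - {w} = X - {u, w}" by auto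
    then have "connected_on E (X - {u, w})" using connected_delete_leaf[OF cY pd(5,6)] by simp
    moreover have "X - {u, w} \<subset> X" using u by auto
    ultimately have "obeys_tree_bound E (X - {u, w})" using IH T2 by blast
    then show ?thesis using obeys_tree_bound_pendant_path[OF f nl c ac u nu pendant(1,2) T2] by blast
  qed
qed

(* For n/2 <= a <= n - 1 every clique of TC(n, a) has order one or two: clique i
   consists of (i, 0) and, when i < n - a, of (i, 1).  So TC(n, a) is a spider
   centred at (0, 0) with the short leg (0, 1), knees (i, 0) and feet (i, 1) for
   0 < i < n - a, and short legs (i, 0) for i >= n - a. *)
context
  fixes n a :: nat
  assumes lower: "n \<le> 2 * a" and upper: "a \<le> n - 1" and two: "2 \<le> n"
begin

lemma TC_alpha_pos: "1 \<le> a" and TC_alpha_lt: "a < n"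
  using lower upper two by linarith+

lemma tc_size_eq: "i < a \<Longrightarrow> tc_size n a i = (if i < n - a then 2 else 1)"
proof (cases "n = 2 * a")
  case True
  then have "n div a = 2" "n mod a = 0" "n - a = a" using TC_alpha_pos by auto
  then show "i < a \<Longrightarrow> ?thesis" unfolding tc_size_def by simp
next
  case False
  then have lt: "n - a < a" using lower by linarith
  have "n div a = Suc ((n - a) div a)" using TC_alpha_pos TC_alpha_lt by (intro le_div_geq) auto
  then have d: "n div a = 1" using lt by simp
  have "n mod a = (n - a) mod a" using TC_alpha_lt by (intro le_mod_geq) auto
  then have m: "n mod a = n - a" using lt by simp
  show ?thesis unfolding tc_size_def d m by simp
qed

lemma TC_V_eq: "TC_V n a = {(i, j). i < a \<and> (j = 0 \<or> (j = 1 \<and> i < n - a))}"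
proof -
  have "(i, j) \<in> TC_V n a \<longleftrightarrow> i < a \<and> (j = 0 \<or> (j = 1 \<and> i < n - a))" for i j
    unfolding TC_V_def using tc_size_eq[of i] by (auto split: if_splits)
  then show ?thesis by auto
qed

lemma TC_E_iff:
  "{p, q} \<in> TC_E n a \<longleftrightarrow> p \<in> TC_V n a \<and> q \<in> TC_V n a \<and> p \<noteq> q \<and>
     (fst p = fst q \<or> (p = (0, 0) \<and> snd q = 0) \<or> (q = (0, 0) \<and> snd p = 0))"
  (is "?edge \<longleftrightarrow> ?adj")
proof
  assume ?edge
  then consider (clique) i j j' where "{p, q} = {(i, j), (i, j')}" "(i, j) \<in> TC_V n a"
      "(i, j') \<in> TC_V n a" "j \<noteq> j'"
    | (spoke) i where "{p, q} = {(0, 0), (i, 0)}" "0 < i" "i < a"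
    unfolding TC_E_def by blast
  then show ?adj
  proof cases
    case clique then show ?thesis by (auto simp: doubleton_eq_iff)
  next
    case spoke
    then have "(0, 0) \<in> TC_V n a" "(i, 0) \<in> TC_V n a" using TC_alpha_pos unfolding TC_V_eq by auto
    then show ?thesis using spoke by (auto simp: doubleton_eq_iff)
  qed
next
  assume adj: ?adj
  obtain i j i' j' where pq: "p = (i, j)" "q = (i', j')" by fastforce
  consider "i = i'" | "p = (0, 0)" "j' = 0" | "q = (0, 0)" "j = 0"
    using adj pq by auto
  then show ?edge
  proof cases
    case 1
    then have "\<exists>k l l'. {p, q} = {(k, l), (k, l')} \<and> (k, l) \<in> TC_V n a \<and> (k, l') \<in> TC_V n a \<and> l \<noteq> l'"
      using adj pq by (intro exI[of _ i] exI[of _ j] exI[of _ j']) auto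
    then show ?thesis unfolding TC_E_def by blast
  next
    case 2
    then have "\<exists>k. {p, q} = {(0, 0), (k, 0)} \<and> 0 < k \<and> k < a"
      using adj pq unfolding TC_V_eq by (intro exI[of _ i']) auto
    then show ?thesis unfolding TC_E_def by blast
  next
    case 3
    then have "\<exists>k. {p, q} = {(0, 0), (k, 0)} \<and> 0 < k \<and> k < a"
      using adj pq unfolding TC_V_eq by (intro exI[of _ i]) auto
    then show ?thesis unfolding TC_E_def by blast
  qed
qed

(* Away from the centre, the only edges join (i, 0) and (i, 1). *)
lemma TC_matching: "induced_matching (TC_E n a) (TC_V n a - {(0, 0)})"
proof (rule induced_matchingI)
  fix y assume y: "y \<in> TC_V n a - {(0, 0)}"
  have "nbhd (TC_E n a) (TC_V n a - {(0, 0)}) y \<subseteq> {(fst y, 1 - snd y)}"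
  proof
    fix t assume "t \<in> nbhd (TC_E n a) (TC_V n a - {(0, 0)}) y"
    then have t: "t \<in> TC_V n a" "t \<noteq> (0, 0)" "{y, t} \<in> TC_E n a" unfolding nbhd_def by auto
    then have "fst y = fst t" "y \<noteq> t" using TC_E_iff y by auto
    moreover have "snd y \<le> 1" "snd t \<le> 1" using y t unfolding TC_V_eq by auto
    ultimately show "t \<in> {(fst y, 1 - snd y)}" by (cases y, cases t) auto
  qed
  then show "\<exists>c. nbhd (TC_E n a) (TC_V n a - {(0, 0)}) y \<subseteq> {c}" by blast
qed

lemma TC_spider: "spider (TC_E n a) (TC_V n a) (0, 0)"
  unfolding spider_def
proof (intro conjI ballI impI)
  show "finite (TC_V n a)"
    by (rule finite_subset[of _ "{..<a} \<times> {..<2}"]) (auto simp: TC_V_eq)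
  show "loopless (TC_E n a)" unfolding loopless_def using TC_E_iff by (metis insert_absorb2)
  show "(0, 0) \<in> TC_V n a" using TC_alpha_pos by (simp add: TC_V_eq)
  show "induced_matching (TC_E n a) (TC_V n a - {(0, 0)})" by (rule TC_matching)
next
  fix y assume y: "y \<in> TC_V n a - {(0, 0)}"
  show "{(0, 0), y} \<in> TC_E n a \<or>
    (\<exists>z\<in>TC_V n a - {(0, 0)}. {(0, 0), z} \<in> TC_E n a \<and> {z, y} \<in> TC_E n a)"
  proof (cases "fst y = 0 \<or> snd y = 0")
    case True
    then have "{(0, 0), y} \<in> TC_E n a" using y TC_alpha_pos unfolding TC_E_iff by (auto simp: TC_V_eq)
    then show ?thesis by blast
  next
    case False
    obtain i j where yij: "y = (i, j)" by (cases y)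
    then have ij: "i \<noteq> 0" "j = 1" "i < a" using y False unfolding TC_V_eq by auto
    have z: "(i, 0) \<in> TC_V n a - {(0, 0)}" using ij unfolding TC_V_eq by auto
    have "{(0, 0), (i, 0)} \<in> TC_E n a" using z TC_alpha_pos unfolding TC_E_iff by (auto simp: TC_V_eq)
    moreover have "{(i, 0), y} \<in> TC_E n a" using z y ij yij unfolding TC_E_iff by auto
    ultimately show ?thesis using z by blast
  qed
next
  fix y z assume y: "y \<in> TC_V n a - {(0, 0)}" and z: "z \<in> TC_V n a - {(0, 0)}"
    and vy: "{(0, 0), y} \<in> TC_E n a" and vz: "{(0, 0), z} \<in> TC_E n a"
  show "{y, z} \<notin> TC_E n a"
  proof
    assume yz: "{y, z} \<in> TC_E n a"
    have "fst y = 0 \<or> snd y = 0" "fst z = 0 \<or> snd z = 0" using vy vz y z TC_E_iff by auto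
    moreover have "fst y = fst z" "y \<noteq> z" using yz y z TC_E_iff by auto
    moreover have "snd y \<le> 1" "snd z \<le> 1" using y z unfolding TC_V_eq by auto
    ultimately show False using y z by (cases y, cases z) auto
  qed
qed

lemma TC_short_leg: "(0, 1) \<in> short_legs (TC_E n a) (TC_V n a) (0, 0)"
proof -
  have t: "t \<notin> nbhd (TC_E n a) (TC_V n a - {(0, 0)}) (0, 1)" for t
  proof
    assume "t \<in> nbhd (TC_E n a) (TC_V n a - {(0, 0)}) (0, 1)"
    then have t: "t \<in> TC_V n a" "t \<noteq> (0, 0)" "{(0, 1), t} \<in> TC_E n a" unfolding nbhd_def by auto
    then have "fst t = 0" "t \<noteq> (0, 1)" using TC_E_iff by auto
    moreover have "snd t \<le> 1" using t unfolding TC_V_eq by auto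
    ultimately show False using t(2) by (cases t) auto
  qed
  have "(0::nat, 1::nat) \<in> TC_V n a - {(0, 0)}" using TC_alpha_pos TC_alpha_lt unfolding TC_V_eq by auto
  then show ?thesis using t unfolding short_legs_def by blast
qed

lemma card_TC_V: "card (TC_V n a) = n"
proof -
  have "TC_V n a = ({..<a} \<times> {0}) \<union> ({..<n - a} \<times> {1})" unfolding TC_V_eq using lower by auto
  moreover have "card (({..<a} \<times> {0}) \<union> ({..<n - a} \<times> {1::nat})) = a + (n - a)"
    by (subst card_Un_disjoint) (auto simp: card_cartesian_product)
  ultimately show ?thesis using TC_alpha_lt by simp
qed

lemma card_TC_feet: "card (feet (TC_E n a) (TC_V n a) (0, 0)) = n - a - 1"
proof -
  have "feet (TC_E n a) (TC_V n a) (0, 0) = (\<lambda>i. (i, 1::nat)) ` {1..<n - a}"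
  proof (rule set_eqI)
    fix y :: "nat \<times> nat"
    obtain i j where y: "y = (i, j)" by (cases y)
    show "y \<in> feet (TC_E n a) (TC_V n a) (0, 0) \<longleftrightarrow> y \<in> (\<lambda>i. (i, 1::nat)) ` {1..<n - a}"
      unfolding feet_def y using TC_E_iff[of "(0, 0)" "(i, j)"] lower TC_alpha_pos by (auto simp: TC_V_eq)
  qed
  moreover have "inj_on (\<lambda>i. (i, 1::nat)) {1..<n - a}" by (simp add: inj_on_def)
  ultimately show ?thesis by (simp add: card_image)
qed

lemma TC_values:
  "stab_num (TC_V n a) (TC_E n a) = a" "fib_index (TC_V n a) (TC_E n a) = tree_bound n a"
proof -
  have ne: "short_legs (TC_E n a) (TC_V n a) (0, 0) \<noteq> {}" using TC_short_leg by blast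
  show alpha: "stab_num (TC_V n a) (TC_E n a) = a"
    using spider_fib(1)[OF TC_spider ne] card_spider[OF TC_spider] card_TC_V card_TC_feet lower
      TC_alpha_lt by simp
  show "fib_index (TC_V n a) (TC_E n a) = tree_bound n a"
    using spider_fib(2)[OF TC_spider ne] alpha card_TC_V by simp
qed

end

lemma spider_edge_iff:
  assumes sp: "spider E X v" and x: "x \<in> X" and y: "y \<in> X"
  shows "{x, y} \<in> E \<longleftrightarrow>
      (x = v \<and> y \<in> short_legs E X v \<union> knees E X v) \<or> (y = v \<and> x \<in> short_legs E X v \<union> knees E X v)
    \<or> (x \<in> knees E X v \<and> y = partner E X v x) \<or> (y \<in> knees E X v \<and> x = partner E X v y)"
    (is "?edge \<longleftrightarrow> ?R")
proof
  assume e: ?edge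
  have xy: "x \<noteq> y" using loopless_edge_ends[OF spider_loopless[OF sp] e] .
  show ?R
  proof (cases "x = v \<or> y = v")
    case True
    then have "x \<in> X - {v} \<and> {v, x} \<in> E \<or> y \<in> X - {v} \<and> {v, y} \<in> E"
      using x y xy e by (auto simp: doubleton_sym)
    then show ?thesis using True xy spider_parts[OF sp] unfolding feet_def by blast
  next
    case False
    then have xX: "x \<in> X - {v}" and yX: "y \<in> X - {v}" using x y by auto
    have yn: "y \<in> nbhd E (X - {v}) x" using e yX unfolding nbhd_def by simp
    then have xn: "x \<in> nbhd E (X - {v}) y" using nbhd_sym[OF yn xX] by simp
    then have "x \<notin> short_legs E X v" "y \<notin> short_legs E X v" using yn unfolding short_legs_def by auto
    then consider "x \<in> knees E X v" | "y \<in> knees E X v" | "x \<in> feet E X v" "y \<in> feet E X v"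
      using xX yX spider_parts[OF sp] by blast
    then show ?thesis
    proof cases
      case 1 then show ?thesis using knee_partner(1)[OF sp] yn by auto
    next
      case 2 then show ?thesis using knee_partner(1)[OF sp] xn by auto
    next
      case 3 then show ?thesis using feet_edgeless[OF sp] e by blast
    qed
  qed
next
  assume r: ?R
  have "{v, t} \<in> E" if "t \<in> short_legs E X v \<union> knees E X v" for t
    using that short_leg_adjacent[OF sp] unfolding knees_def by blast
  moreover have "{t, partner E X v t} \<in> E" if "t \<in> knees E X v" for t
    using knee_partner_edge[OF sp that] .
  ultimately show ?edge using r doubleton_sym by metis
qed

lemma spider_iso_criterion:
  assumes sp: "spider E X v" and sp': "spider E' X' v'" and bij: "bij_betw f X X'" and fv: "f v = v'"
    and fS: "\<And>y. y \<in> X \<Longrightarrow> f y \<in> short_legs E' X' v' \<longleftrightarrow> y \<in> short_legs E X v"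
    and fN: "\<And>y. y \<in> X \<Longrightarrow> f y \<in> knees E' X' v' \<longleftrightarrow> y \<in> knees E X v"
    and fp: "\<And>z. z \<in> knees E X v \<Longrightarrow> f (partner E X v z) = partner E' X' v' (f z)"
  shows "graph_iso X E X' E'"
proof -
  have inj: "inj_on f X" and fX: "\<And>y. y \<in> X \<Longrightarrow> f y \<in> X'" using bij by (auto simp: bij_betw_def)
  have fv_iff: "f y = v' \<longleftrightarrow> y = v" if "y \<in> X" for y
    using inj fv that spider_centre[OF sp] unfolding inj_on_def by metis
  have pX: "partner E X v z \<in> X" if "z \<in> knees E X v" for z
    using knee_partner(2)[OF sp that] unfolding feet_def by simp
  have partner_iff: "(x \<in> knees E X v \<and> y = partner E X v x) \<longleftrightarrow>
      (f x \<in> knees E' X' v' \<and> f y = partner E' X' v' (f x))" if "x \<in> X" "y \<in> X" for x y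
    using fN[OF that(1)] fp inj pX that unfolding inj_on_def by metis
  have "{x, y} \<in> E \<longleftrightarrow> {f x, f y} \<in> E'" if "x \<in> X" "y \<in> X" for x y
    unfolding spider_edge_iff[OF sp that] spider_edge_iff[OF sp' fX[OF that(1)] fX[OF that(2)]]
    using that fv_iff fS fN partner_iff by blast
  then show ?thesis unfolding graph_iso_def using bij by blast
qed

(* A spider is determined up to isomorphism by its numbers of short legs and feet:
   match short legs and knees arbitrarily, and feet along the partner maps. *)
lemma spider_iso:
  assumes sp: "spider E X v" and sp': "spider E' X' v'"
    and cs: "card (short_legs E X v) = card (short_legs E' X' v')"
    and cf: "card (feet E X v) = card (feet E' X' v')"
  shows "graph_iso X E X' E'"
proof -
  let ?S = "short_legs E X v" and ?N = "knees E X v" and ?F = "feet E X v" and ?p = "partner E X v"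
  let ?S' = "short_legs E' X' v'" and ?N' = "knees E' X' v'" and ?F' = "feet E' X' v'"
    and ?p' = "partner E' X' v'"
  obtain \<sigma> where \<sigma>: "bij_betw \<sigma> ?S ?S'"
    using finite_same_card_bij[OF spider_parts_finite(1)[OF sp] spider_parts_finite(1)[OF sp'] cs] by blast
  have "card ?N = card ?N'" using card_knees[OF sp] card_knees[OF sp'] cf by simp
  then obtain \<tau> where \<tau>: "bij_betw \<tau> ?N ?N'"
    using finite_same_card_bij[OF spider_parts_finite(2)[OF sp] spider_parts_finite(2)[OF sp']] by blast
  define g where "g = ?p' \<circ> \<tau> \<circ> inv_into ?N ?p"
  have g: "bij_betw g ?F ?F'" unfolding g_def
    using bij_betw_inv_into[OF partner_bij[OF sp]] \<tau> partner_bij[OF sp'] by (blast intro: bij_betw_trans)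
  define f where "f y = (if y = v then v' else if y \<in> ?S then \<sigma> y else if y \<in> ?N then \<tau> y else g y)" for y
  have v_parts: "v \<notin> ?S" "v \<notin> ?N" "v \<notin> ?F" unfolding short_legs_def knees_def feet_def by auto
  note disj = spider_parts_disjoint[OF sp] and disj' = spider_parts_disjoint[OF sp']
  have fS: "bij_betw f ?S ?S'" using \<sigma> v_parts by (subst bij_betw_cong[of _ f \<sigma>]) (auto simp: f_def)
  have fN: "bij_betw f ?N ?N'" using \<tau> v_parts disj by (subst bij_betw_cong[of _ f \<tau>]) (auto simp: f_def)
  have fF: "bij_betw f ?F ?F'" using g v_parts disj by (subst bij_betw_cong[of _ f g]) (auto simp: f_def)
  have parts: "X = {v} \<union> ?S \<union> ?N \<union> ?F" "X' = {v'} \<union> ?S' \<union> ?N' \<union> ?F'"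
    using spider_parts[OF sp] spider_parts[OF sp'] spider_centre[OF sp] spider_centre[OF sp'] by auto
  have v'_parts: "v' \<notin> ?S'" "v' \<notin> ?N'" "v' \<notin> ?F'" unfolding short_legs_def knees_def feet_def by auto
  have "bij_betw f ({v} \<union> ?S \<union> ?N \<union> ?F) ({v'} \<union> ?S' \<union> ?N' \<union> ?F')"
    using v'_parts disj'
    by (intro bij_betw_combine fS fN fF) (auto simp: f_def)
  then have bij: "bij_betw f X X'" using parts by simp
  have inj: "inj_on f X" using bij by (simp add: bij_betw_def)
  have SN: "?S \<subseteq> X" "?N \<subseteq> X" using parts by auto
  have classes: "f y \<in> ?S' \<longleftrightarrow> y \<in> ?S" "f y \<in> ?N' \<longleftrightarrow> y \<in> ?N" if "y \<in> X" for y
    using inj_on_image_mem_iff[OF inj that SN(1)] inj_on_image_mem_iff[OF inj that SN(2)]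
      bij_betw_imp_surj_on[OF fS] bij_betw_imp_surj_on[OF fN] by simp_all
  have "f (?p z) = ?p' (f z)" if z: "z \<in> ?N" for z
  proof -
    have "?p z \<in> ?F" "inv_into ?N ?p (?p z) = z"
      using partner_bij[OF sp] z by (auto simp: bij_betw_def inv_into_f_f)
    then show ?thesis using z v_parts disj unfolding f_def g_def by auto
  qed
  then show ?thesis
    using spider_iso_criterion[OF sp sp' bij] classes by (simp add: f_def)
qed

lemma graph_iso_fib_index:
  assumes "graph_iso V E V' E'"
  shows "fib_index V E = fib_index V' E'"
proof -
  obtain f where bij: "bij_betw f V V'" and ed: "\<forall>x\<in>V. \<forall>y\<in>V. {x, y} \<in> E \<longleftrightarrow> {f x, f y} \<in> E'"
    using assms unfolding graph_iso_def by blast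
  have inj: "inj_on f V" and img: "f ` V = V'" using bij by (auto simp: bij_betw_def)
  have "{S'. stable_set V' E' S'} = image f ` {S. stable_set V E S}"
  proof
    show "{S'. stable_set V' E' S'} \<subseteq> image f ` {S. stable_set V E S}"
    proof
      fix S' assume S': "S' \<in> {S'. stable_set V' E' S'}"
      define S where "S = {x \<in> V. f x \<in> S'}"
      have "f ` S = S'" using S' img unfolding S_def stable_set_def by auto
      moreover have "stable_set V E S" using S' ed unfolding S_def stable_set_def by auto
      ultimately show "S' \<in> image f ` {S. stable_set V E S}" by blast
    qed
    show "image f ` {S. stable_set V E S} \<subseteq> {S'. stable_set V' E' S'}"
      using ed img unfolding stable_set_def by blast
  qed
  moreover have "inj_on (image f) {S. stable_set V E S}"
    using inj_on_image_Pow[OF inj] unfolding stable_set_def by (auto simp: inj_on_def)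
  ultimately show ?thesis unfolding fib_index_def by (simp add: card_image)
qed

lemma simple_graph_loopless: "simple_graph V E \<Longrightarrow> loopless E"
  unfolding simple_graph_def loopless_def by force

(* A tree attains the tree bound iff it is isomorphic to TC(n, alpha): an extremal
   tree has a spider centre, and as spiders with the same numbers of short legs and
   feet the two graphs are isomorphic. *)
lemma tree_extremal_iff_TC:
  assumes f: "finite X" and nl: "loopless E" and c: "connected_on E X" and ac: "\<not> has_cycle X E"
    and n: "card X = n" "2 \<le> n"
  shows "fib_index X E = tree_bound n (stab_num X E) \<longleftrightarrow>
    graph_iso X E (TC_V n (stab_num X E)) (TC_E n (stab_num X E))"
proof
  let ?a = "stab_num X E"
  have range: "n \<le> 2 * ?a" "?a \<le> n - 1" using tree_stab_num_range[OF f nl c ac] n by auto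
  note TC = TC_spider[OF range n(2)] TC_values[OF range n(2)]
  assume "fib_index X E = tree_bound n ?a"
  then obtain v where "spider_centre E X v"
    using tree_obeys_tree_bound[OF f nl c ac] n unfolding obeys_tree_bound_def by auto
  then have sp: "spider E X v" and ne: "short_legs E X v \<noteq> {}"
    using tree_spider[OF f nl c ac] unfolding spider_centre_def by auto
  have "card (feet E X v) = card (feet (TC_E n ?a) (TC_V n ?a) (0, 0))"
    using spider_fib(1)[OF sp ne] card_spider[OF sp] card_TC_feet[OF range n(2)] n by simp
  moreover then have "card (short_legs E X v) = card (short_legs (TC_E n ?a) (TC_V n ?a) (0, 0))"
    using card_spider[OF sp] card_spider[OF TC(1)] card_TC_V[OF range n(2)] n by simp
  ultimately show "graph_iso X E (TC_V n ?a) (TC_E n ?a)" using spider_iso[OF sp TC(1)] by blast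
next
  let ?a = "stab_num X E"
  have range: "n \<le> 2 * ?a" "?a \<le> n - 1" using tree_stab_num_range[OF f nl c ac] n by auto
  assume "graph_iso X E (TC_V n ?a) (TC_E n ?a)"
  then have "fib_index X E = fib_index (TC_V n ?a) (TC_E n ?a)" by (rule graph_iso_fib_index)
  then show "fib_index X E = tree_bound n ?a" using TC_values(2)[OF range n(2)] by simp
qed

theorem mainTheorem10:
  fixes V :: "'a set" and E :: "'a set set" and n \<alpha> :: nat
  assumes "is_tree V E"
    and "card V = n" and "n \<ge> 2"
    and "stab_num V E = \<alpha>"
  shows "fib_index V E \<le> 3 ^ (n - \<alpha> - 1) * 2 ^ (2 * \<alpha> - n + 1) + 2 ^ (n - \<alpha> - 1)
    \<and> (fib_index V E = 3 ^ (n - \<alpha> - 1) * 2 ^ (2 * \<alpha> - n + 1) + 2 ^ (n - \<alpha> - 1)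
           \<longleftrightarrow> graph_iso V E (TC_V n \<alpha>) (TC_E n \<alpha>))
    \<and> (\<forall>a. n \<le> 2 * a \<and> a \<le> n - 1 \<longrightarrow>
           f_TC n a = 3 ^ (n - a - 1) * 2 ^ (2 * a - n + 1) + 2 ^ (n - a - 1))"
proof -
  have sg: "simple_graph V E" and ac: "\<not> has_cycle V E" and cg: "connected_graph V E"
    using assms(1) unfolding is_tree_def by auto
  have f: "finite V" using sg unfolding simple_graph_def by simp
  note nl = simple_graph_loopless[OF sg] and c = connected_graph_connected_on[OF sg cg]
  have "fib_index V E \<le> tree_bound n \<alpha>"
    using tree_obeys_tree_bound[OF f nl c ac] assms(2-4) unfolding obeys_tree_bound_def by simp
  moreover have "fib_index V E = tree_bound n \<alpha> \<longleftrightarrow> graph_iso V E (TC_V n \<alpha>) (TC_E n \<alpha>)"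
    using tree_extremal_iff_TC[OF f nl c ac assms(2,3)] assms(4) by simp
  moreover have "\<forall>a. n \<le> 2 * a \<and> a \<le> n - 1 \<longrightarrow> f_TC n a = tree_bound n a"
    using TC_values(2)[OF _ _ assms(3)] unfolding f_TC_def by blast
  ultimately show ?thesis unfolding tree_bound_def by simp
qed

end
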